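(* For every finite set $Q$, the category $\mathbf{Lam}_Q$ is cartesian closed and the quotient functor $\pi_Q \colon \mathbf{Lam} \to \mathbf{Lam}_Q$ (identity on objects, sending a term to its $\sim_Q$-class) is a cartesian closed functor. Moreover, every partial surjection $f \colon Q \twoheadrightarrow Q'$ between finite sets induces a cartesian closed identity-on-objects functor $\mathbf{Lam}_f \colon \mathbf{Lam}_Q \to \mathbf{Lam}_{Q'}$ such that $\mathbf{Lam}_f \circ \pi_Q = \pi_{Q'}$.
   Context: Simple types are built from a base type $o$ (with the type constructors of the simply typed $\lambda$-calculus, so that $\mathbf{Lam}$ is the free cartesian closed category on one object). $\Lambda(A)$ is the set of closed $\lambda$-terms of type $A$ modulo $\beta\eta$; $\mathbf{Lam}$ has simple types as objects and $\mathbf{Lam}(A,B) = \Lambda(A\Rightarrow B)$. For a finite set $Q$, $[\![-]\!]_Q$ is the standard interpretation in finite sets with $[\![o]\!]_Q = Q$ and $[\![A\Rightarrow B]\!]_Q$ all functions. For each type $A$, $M \sim_Q^A N$ iff $[\![M]\!]_Q = [\![N]\!]_Q$; these relations form a congruence on $\mathbf{Lam}$, and $\mathbf{Lam}_Q = \mathbf{Lam}/\sim_Q$, i.e. $\mathbf{Lam}_Q(A,B) = \Lambda(A\Rightarrow B)/\sim_Q^{A\Rightarrow B}$. A partial surjection $f\colon Q\twoheadrightarrow Q'$ is a relation that is the graph of a partial function surjective onto $Q'$. *)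

theory Defs
  imports Main "HOL-Library.FSet"
begin

datatype ty = TyO | TyOne | TyProd ty ty | TyArr ty ty

datatype tm = TVar nat | TAbs ty tm | TApp tm tm | TUnit | TPair tm tm | TFst tm | TSnd tm

inductive typing :: "ty list \<Rightarrow> tm \<Rightarrow> ty \<Rightarrow> bool" where
  t_var: "i < length \<Gamma> \<Longrightarrow> typing \<Gamma> (TVar i) (\<Gamma> ! i)"
| t_abs: "typing (A # \<Gamma>) M B \<Longrightarrow> typing \<Gamma> (TAbs A M) (TyArr A B)"
| t_app: "typing \<Gamma> M (TyArr A B) \<Longrightarrow> typing \<Gamma> N A \<Longrightarrow> typing \<Gamma> (TApp M N) B"
| t_unit: "typing \<Gamma> TUnit TyOne"
| t_pair: "typing \<Gamma> M A \<Longrightarrow> typing \<Gamma> N B \<Longrightarrow> typing \<Gamma> (TPair M N) (TyProd A B)"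
| t_fst: "typing \<Gamma> M (TyProd A B) \<Longrightarrow> typing \<Gamma> (TFst M) A"
| t_snd: "typing \<Gamma> M (TyProd A B) \<Longrightarrow> typing \<Gamma> (TSnd M) B"

primrec lift :: "nat \<Rightarrow> tm \<Rightarrow> tm" where
  "lift k (TVar i) = (if i < k then TVar i else TVar (Suc i))"
| "lift k (TAbs A M) = TAbs A (lift (Suc k) M)"
| "lift k (TApp M N) = TApp (lift k M) (lift k N)"
| "lift k TUnit = TUnit"
| "lift k (TPair M N) = TPair (lift k M) (lift k N)"
| "lift k (TFst M) = TFst (lift k M)"
| "lift k (TSnd M) = TSnd (lift k M)"

primrec subst :: "tm \<Rightarrow> nat \<Rightarrow> tm \<Rightarrow> tm" where
  "subst (TVar i) k N = (if i < k then TVar i else if i = k then N else TVar (i - 1))"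
| "subst (TAbs A M) k N = TAbs A (subst M (Suc k) (lift 0 N))"
| "subst (TApp M M') k N = TApp (subst M k N) (subst M' k N)"
| "subst TUnit k N = TUnit"
| "subst (TPair M M') k N = TPair (subst M k N) (subst M' k N)"
| "subst (TFst M) k N = TFst (subst M k N)"
| "subst (TSnd M) k N = TSnd (subst M k N)"

text \<open>Typed beta-eta equality (equational theory of the free CCC on one object).\<close>
inductive beq :: "ty list \<Rightarrow> tm \<Rightarrow> tm \<Rightarrow> ty \<Rightarrow> bool" where
  beq_refl: "typing \<Gamma> M A \<Longrightarrow> beq \<Gamma> M M A"
| beq_sym: "beq \<Gamma> M N A \<Longrightarrow> beq \<Gamma> N M A"
| beq_trans: "beq \<Gamma> M N A \<Longrightarrow> beq \<Gamma> N K A \<Longrightarrow> beq \<Gamma> M K A"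
| beq_abs: "beq (A # \<Gamma>) M M' B \<Longrightarrow> beq \<Gamma> (TAbs A M) (TAbs A M') (TyArr A B)"
| beq_app: "beq \<Gamma> M M' (TyArr A B) \<Longrightarrow> beq \<Gamma> N N' A \<Longrightarrow> beq \<Gamma> (TApp M N) (TApp M' N') B"
| beq_pair: "beq \<Gamma> M M' A \<Longrightarrow> beq \<Gamma> N N' B \<Longrightarrow> beq \<Gamma> (TPair M N) (TPair M' N') (TyProd A B)"
| beq_fst: "beq \<Gamma> M M' (TyProd A B) \<Longrightarrow> beq \<Gamma> (TFst M) (TFst M') A"
| beq_snd: "beq \<Gamma> M M' (TyProd A B) \<Longrightarrow> beq \<Gamma> (TSnd M) (TSnd M') B"
| beq_beta: "typing (A # \<Gamma>) M B \<Longrightarrow> typing \<Gamma> N A \<Longrightarrow> beq \<Gamma> (TApp (TAbs A M) N) (subst M 0 N) B"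
| beq_eta: "typing \<Gamma> M (TyArr A B) \<Longrightarrow> beq \<Gamma> (TAbs A (TApp (lift 0 M) (TVar 0))) M (TyArr A B)"
| beq_fst_pair: "typing \<Gamma> M A \<Longrightarrow> typing \<Gamma> N B \<Longrightarrow> beq \<Gamma> (TFst (TPair M N)) M A"
| beq_snd_pair: "typing \<Gamma> M A \<Longrightarrow> typing \<Gamma> N B \<Longrightarrow> beq \<Gamma> (TSnd (TPair M N)) N B"
| beq_surj_pair: "typing \<Gamma> M (TyProd A B) \<Longrightarrow> beq \<Gamma> (TPair (TFst M) (TSnd M)) M (TyProd A B)"
| beq_unit_eta: "typing \<Gamma> M TyOne \<Longrightarrow> beq \<Gamma> M TUnit TyOne"

text \<open>Universe of semantic values; functions are represented by their (finite) graphs.\<close>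
datatype 'q val = VB 'q | VU | VP "'q val" "'q val" | VF "('q val \<times> 'q val) fset"

primrec sdom :: "'q set \<Rightarrow> ty \<Rightarrow> 'q val set" where
  "sdom Q TyO = VB ` Q"
| "sdom Q TyOne = {VU}"
| "sdom Q (TyProd A B) = {VP a b | a b. a \<in> sdom Q A \<and> b \<in> sdom Q B}"
| "sdom Q (TyArr A B) = {VF g | g. \<exists>h. (\<forall>a\<in>sdom Q A. h a \<in> sdom Q B)
                                          \<and> fset g = (\<lambda>a. (a, h a)) ` sdom Q A}"

definition vapp :: "'q val \<Rightarrow> 'q val \<Rightarrow> 'q val" where
  "vapp f v = (case f of VF g \<Rightarrow> (THE w. (v, w) \<in> fset g) | _ \<Rightarrow> undefined)"

definition vfst :: "'q val \<Rightarrow> 'q val" where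
  "vfst v = (case v of VP a b \<Rightarrow> a | _ \<Rightarrow> undefined)"

definition vsnd :: "'q val \<Rightarrow> 'q val" where
  "vsnd v = (case v of VP a b \<Rightarrow> b | _ \<Rightarrow> undefined)"

primrec eval :: "tm \<Rightarrow> 'q set \<Rightarrow> 'q val list \<Rightarrow> 'q val" where
  "eval (TVar i) Q \<rho> = \<rho> ! i"
| "eval (TAbs A M) Q \<rho> = VF (Abs_fset ((\<lambda>v. (v, eval M Q (v # \<rho>))) ` sdom Q A))"
| "eval (TApp M N) Q \<rho> = vapp (eval M Q \<rho>) (eval N Q \<rho>)"
| "eval TUnit Q \<rho> = VU"
| "eval (TPair M N) Q \<rho> = VP (eval M Q \<rho>) (eval N Q \<rho>)"
| "eval (TFst M) Q \<rho> = vfst (eval M Q \<rho>)"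
| "eval (TSnd M) Q \<rho> = vsnd (eval M Q \<rho>)"

definition sem :: "'q set \<Rightarrow> tm \<Rightarrow> 'q val" where
  "sem Q M = eval M Q []"

record ('o, 'm) cat =
  Obj :: "'o set"
  Hom :: "'o \<Rightarrow> 'o \<Rightarrow> 'm set"
  Idm :: "'o \<Rightarrow> 'm"
  Cmp :: "'o \<Rightarrow> 'o \<Rightarrow> 'o \<Rightarrow> 'm \<Rightarrow> 'm \<Rightarrow> 'm"  \<comment> \<open>Cmp A B C g f = g o f for f : A -> B, g : B -> C\<close>

definition is_category :: "('o, 'm) cat \<Rightarrow> bool" where
  "is_category C \<longleftrightarrow>
     (\<forall>A\<in>Obj C. Idm C A \<in> Hom C A A) \<and>
     (\<forall>A\<in>Obj C. \<forall>B\<in>Obj C. \<forall>D\<in>Obj C. \<forall>f\<in>Hom C A B. \<forall>g\<in>Hom C B D.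
        Cmp C A B D g f \<in> Hom C A D) \<and>
     (\<forall>A\<in>Obj C. \<forall>B\<in>Obj C. \<forall>f\<in>Hom C A B.
        Cmp C A B B (Idm C B) f = f \<and> Cmp C A A B f (Idm C A) = f) \<and>
     (\<forall>A\<in>Obj C. \<forall>B\<in>Obj C. \<forall>D\<in>Obj C. \<forall>E\<in>Obj C.
        \<forall>f\<in>Hom C A B. \<forall>g\<in>Hom C B D. \<forall>h\<in>Hom C D E.
        Cmp C A D E h (Cmp C A B D g f) = Cmp C A B E (Cmp C B D E h g) f)"

definition is_terminal :: "('o, 'm) cat \<Rightarrow> 'o \<Rightarrow> bool" where
  "is_terminal C T \<longleftrightarrow> T \<in> Obj C \<and> (\<forall>X\<in>Obj C. \<exists>!h. h \<in> Hom C X T)"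

definition is_product :: "('o, 'm) cat \<Rightarrow> 'o \<Rightarrow> 'o \<Rightarrow> 'o \<Rightarrow> 'm \<Rightarrow> 'm \<Rightarrow> bool" where
  "is_product C A B P p1 p2 \<longleftrightarrow>
     P \<in> Obj C \<and> p1 \<in> Hom C P A \<and> p2 \<in> Hom C P B \<and>
     (\<forall>X\<in>Obj C. \<forall>f\<in>Hom C X A. \<forall>g\<in>Hom C X B.
        \<exists>!h. h \<in> Hom C X P \<and> Cmp C X P A p1 h = f \<and> Cmp C X P B p2 h = g)"

definition is_exponential ::
  "('o, 'm) cat \<Rightarrow> 'o \<Rightarrow> 'o \<Rightarrow> 'o \<Rightarrow> 'o \<Rightarrow> 'm \<Rightarrow> 'm \<Rightarrow> 'm \<Rightarrow> bool" where
  "is_exponential C A B E P p1 p2 ev \<longleftrightarrow>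
     E \<in> Obj C \<and> is_product C E A P p1 p2 \<and> ev \<in> Hom C P B \<and>
     (\<forall>X\<in>Obj C. \<forall>R r1 r2. is_product C X A R r1 r2 \<longrightarrow>
        (\<forall>f\<in>Hom C R B. \<exists>!h. h \<in> Hom C X E \<and>
           (\<exists>k\<in>Hom C R P. Cmp C R P E p1 k = Cmp C R X E h r1 \<and>
                            Cmp C R P A p2 k = r2 \<and> Cmp C R P B ev k = f)))"

definition cartesian_closed :: "('o, 'm) cat \<Rightarrow> bool" where
  "cartesian_closed C \<longleftrightarrow> is_category C \<and>
     (\<exists>T. is_terminal C T) \<and>
     (\<forall>A\<in>Obj C. \<forall>B\<in>Obj C. \<exists>P p1 p2. is_product C A B P p1 p2) \<and>
     (\<forall>A\<in>Obj C. \<forall>B\<in>Obj C. \<exists>E P p1 p2 ev. is_exponential C A B E P p1 p2 ev)"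

definition is_functor ::
  "('o, 'm) cat \<Rightarrow> ('p, 'n) cat \<Rightarrow> ('o \<Rightarrow> 'p) \<Rightarrow> ('o \<Rightarrow> 'o \<Rightarrow> 'm \<Rightarrow> 'n) \<Rightarrow> bool" where
  "is_functor C D Fo Fm \<longleftrightarrow> is_category C \<and> is_category D \<and>
     (\<forall>A\<in>Obj C. Fo A \<in> Obj D) \<and>
     (\<forall>A\<in>Obj C. \<forall>B\<in>Obj C. \<forall>f\<in>Hom C A B. Fm A B f \<in> Hom D (Fo A) (Fo B)) \<and>
     (\<forall>A\<in>Obj C. Fm A A (Idm C A) = Idm D (Fo A)) \<and>
     (\<forall>A\<in>Obj C. \<forall>B\<in>Obj C. \<forall>E\<in>Obj C. \<forall>f\<in>Hom C A B. \<forall>g\<in>Hom C B E.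
        Fm A E (Cmp C A B E g f) = Cmp D (Fo A) (Fo B) (Fo E) (Fm B E g) (Fm A B f))"

definition cc_functor ::
  "('o, 'm) cat \<Rightarrow> ('p, 'n) cat \<Rightarrow> ('o \<Rightarrow> 'p) \<Rightarrow> ('o \<Rightarrow> 'o \<Rightarrow> 'm \<Rightarrow> 'n) \<Rightarrow> bool" where
  "cc_functor C D Fo Fm \<longleftrightarrow> is_functor C D Fo Fm \<and>
     (\<forall>T. is_terminal C T \<longrightarrow> is_terminal D (Fo T)) \<and>
     (\<forall>A B P p1 p2. A \<in> Obj C \<longrightarrow> B \<in> Obj C \<longrightarrow> is_product C A B P p1 p2 \<longrightarrow>
        is_product D (Fo A) (Fo B) (Fo P) (Fm P A p1) (Fm P B p2)) \<and>
     (\<forall>A B E P p1 p2 ev. A \<in> Obj C \<longrightarrow> B \<in> Obj C \<longrightarrow> is_exponential C A B E P p1 p2 ev \<longrightarrow>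
        is_exponential D (Fo A) (Fo B) (Fo E) (Fo P) (Fm P E p1) (Fm P A p2) (Fm P B ev))"

definition id_tm :: "ty \<Rightarrow> tm" where
  "id_tm A = TAbs A (TVar 0)"

text \<open>comp_tm A M N is the term for N o M, i.e. \<lambda>x:A. N (M x).\<close>
definition comp_tm :: "ty \<Rightarrow> tm \<Rightarrow> tm \<Rightarrow> tm" where
  "comp_tm A M N = TAbs A (TApp (lift 0 N) (TApp (lift 0 M) (TVar 0)))"

definition Lam :: "(ty, tm set) cat" where
  "Lam = \<lparr> Obj = UNIV,
           Hom = (\<lambda>A B. {c. \<exists>M. typing [] M (TyArr A B) \<and> c = {N. beq [] M N (TyArr A B)}}),
           Idm = (\<lambda>A. {N. beq [] (id_tm A) N (TyArr A A)}),
           Cmp = (\<lambda>A B C g f. {K. \<exists>N\<in>g. \<exists>M\<in>f. beq [] (comp_tm A M N) K (TyArr A C)}) \<rparr>"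

definition simQ :: "'q set \<Rightarrow> ty \<Rightarrow> tm \<Rightarrow> tm \<Rightarrow> bool" where
  "simQ Q A M N \<longleftrightarrow> typing [] M A \<and> typing [] N A \<and> sem Q M = sem Q N"

definition LamQ :: "'q set \<Rightarrow> (ty, tm set) cat" where
  "LamQ Q = \<lparr> Obj = UNIV,
           Hom = (\<lambda>A B. {c. \<exists>M. typing [] M (TyArr A B) \<and> c = {N. simQ Q (TyArr A B) M N}}),
           Idm = (\<lambda>A. {N. simQ Q (TyArr A A) (id_tm A) N}),
           Cmp = (\<lambda>A B C g f. {K. \<exists>N\<in>g. \<exists>M\<in>f. simQ Q (TyArr A C) (comp_tm A M N) K}) \<rparr>"

definition piQ :: "'q set \<Rightarrow> ty \<Rightarrow> ty \<Rightarrow> tm set \<Rightarrow> tm set" where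
  "piQ Q A B c = {N. \<exists>M\<in>c. simQ Q (TyArr A B) M N}"

definition partial_surj :: "('a \<times> 'b) set \<Rightarrow> 'a set \<Rightarrow> 'b set \<Rightarrow> bool" where
  "partial_surj f Q Q' \<longleftrightarrow> f \<subseteq> Q \<times> Q' \<and> single_valued f \<and> Range f = Q'"

end

(*
  Lam and Lam_Q are both quotients of the closed simply typed terms by a congruence R that
  contains beta-eta and is compatible with composition, pairing and currying.  Every such
  quotient is cartesian closed, with the unit, product and arrow types as canonical terminal
  object, products and exponentials, since the equations of a cartesian closed category hold
  up to beta-eta.  If R is contained in R', mapping an R-class to the R'-class containing it is
  an identity-on-objects functor that sends the canonical structure to the canonical structure;
  as terminal objects, products and exponentials are unique up to isomorphism, it then preserves
  all of them.

  Equality in the finite-set model Q is such a congruence, by soundness of beta-eta.  For a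
  partial surjection f from Q onto Q', the logical relation induced by f is again a partial
  surjection at every type, and by the fundamental lemma it relates the two interpretations of
  every closed term.  Since it is single-valued, terms identified over Q are identified over Q',
  which gives the functor Lam_f.
*)
theory Submission
  imports Defs
begin

section \<open>Terminal objects, products and exponentials\<close>

lemma ex1_unique: "\<exists>!x. P x \<Longrightarrow> P a \<Longrightarrow> P b \<Longrightarrow> a = b"
  by blast

lemma category_Idm_in_Hom: "is_category C \<Longrightarrow> A \<in> Obj C \<Longrightarrow> Idm C A \<in> Hom C A A"
  unfolding is_category_def by blast

lemma category_Cmp_in_Hom:
  "is_category C \<Longrightarrow> A \<in> Obj C \<Longrightarrow> B \<in> Obj C \<Longrightarrow> D \<in> Obj C \<Longrightarrow>
   f \<in> Hom C A B \<Longrightarrow> g \<in> Hom C B D \<Longrightarrow> Cmp C A B D g f \<in> Hom C A D"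
  unfolding is_category_def by blast

lemma category_Idm_left:
  "is_category C \<Longrightarrow> A \<in> Obj C \<Longrightarrow> B \<in> Obj C \<Longrightarrow> f \<in> Hom C A B \<Longrightarrow> Cmp C A B B (Idm C B) f = f"
  unfolding is_category_def by blast

lemma category_Idm_right:
  "is_category C \<Longrightarrow> A \<in> Obj C \<Longrightarrow> B \<in> Obj C \<Longrightarrow> f \<in> Hom C A B \<Longrightarrow> Cmp C A A B f (Idm C A) = f"
  unfolding is_category_def by blast

lemma category_Cmp_assoc:
  "is_category C \<Longrightarrow> A \<in> Obj C \<Longrightarrow> B \<in> Obj C \<Longrightarrow> D \<in> Obj C \<Longrightarrow> E \<in> Obj C \<Longrightarrow>
   f \<in> Hom C A B \<Longrightarrow> g \<in> Hom C B D \<Longrightarrow> h \<in> Hom C D E \<Longrightarrow>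
   Cmp C A D E h (Cmp C A B D g f) = Cmp C A B E (Cmp C B D E h g) f"
  unfolding is_category_def by blast

lemma functor_Hom:
  "is_functor C D Fo Fm \<Longrightarrow> A \<in> Obj C \<Longrightarrow> B \<in> Obj C \<Longrightarrow> f \<in> Hom C A B \<Longrightarrow> Fm A B f \<in> Hom D (Fo A) (Fo B)"
  unfolding is_functor_def by blast

lemma functor_Obj: "is_functor C D Fo Fm \<Longrightarrow> A \<in> Obj C \<Longrightarrow> Fo A \<in> Obj D"
  unfolding is_functor_def by blast

lemma functor_Idm: "is_functor C D Fo Fm \<Longrightarrow> A \<in> Obj C \<Longrightarrow> Fm A A (Idm C A) = Idm D (Fo A)"
  unfolding is_functor_def by blast

lemma functor_Cmp:
  "is_functor C D Fo Fm \<Longrightarrow> A \<in> Obj C \<Longrightarrow> B \<in> Obj C \<Longrightarrow> E \<in> Obj C \<Longrightarrow>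
   f \<in> Hom C A B \<Longrightarrow> g \<in> Hom C B E \<Longrightarrow>
   Fm A E (Cmp C A B E g f) = Cmp D (Fo A) (Fo B) (Fo E) (Fm B E g) (Fm A B f)"
  unfolding is_functor_def by blast

lemma functor_categories: "is_functor C D Fo Fm \<Longrightarrow> is_category C \<and> is_category D"
  unfolding is_functor_def by blast

lemma terminal_Obj: "is_terminal C T \<Longrightarrow> T \<in> Obj C"
  unfolding is_terminal_def by blast

lemma terminal_ex_hom: "is_terminal C T \<Longrightarrow> X \<in> Obj C \<Longrightarrow> \<exists>h. h \<in> Hom C X T"
  unfolding is_terminal_def by blast

lemma product_parts: "is_product C A B P p1 p2 \<Longrightarrow> P \<in> Obj C \<and> p1 \<in> Hom C P A \<and> p2 \<in> Hom C P B"
  unfolding is_product_def by blast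

lemma product_universal:
  "is_product C A B P p1 p2 \<Longrightarrow> X \<in> Obj C \<Longrightarrow> f \<in> Hom C X A \<Longrightarrow> g \<in> Hom C X B \<Longrightarrow>
   \<exists>!h. h \<in> Hom C X P \<and> Cmp C X P A p1 h = f \<and> Cmp C X P B p2 h = g"
  unfolding is_product_def by blast

lemma terminal_hom_unique:
  "is_terminal C T \<Longrightarrow> X \<in> Obj C \<Longrightarrow> h \<in> Hom C X T \<Longrightarrow> h' \<in> Hom C X T \<Longrightarrow> h = h'"
  unfolding is_terminal_def by blast

lemma terminal_comparison:
  assumes C: "is_category C" and T: "is_terminal C T" and T': "is_terminal C T'"
  obtains i j where "i \<in> Hom C T T'" "j \<in> Hom C T' T" "Cmp C T T' T j i = Idm C T"
proof -
  have obj: "T \<in> Obj C" "T' \<in> Obj C" using T T' by (simp_all add: terminal_Obj)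
  obtain i j where i: "i \<in> Hom C T T'" and j: "j \<in> Hom C T' T"
    using terminal_ex_hom[OF T' obj(1)] terminal_ex_hom[OF T obj(2)] by blast
  have "Cmp C T T' T j i = Idm C T"
    by (rule terminal_hom_unique[OF T obj(1) category_Cmp_in_Hom[OF C obj(1) obj(2) obj(1) i j]
          category_Idm_in_Hom[OF C obj(1)]])
  with i j show ?thesis by (rule that)
qed

lemma terminal_retract:
  assumes C: "is_category C" and T0: "is_terminal C T0" and T: "T \<in> Obj C"
    and i: "i \<in> Hom C T T0" and j: "j \<in> Hom C T0 T" and ji: "Cmp C T T0 T j i = Idm C T"
  shows "is_terminal C T"
  unfolding is_terminal_def
proof (intro conjI ballI T)
  fix X assume X: "X \<in> Obj C"
  have T0obj: "T0 \<in> Obj C" using terminal_Obj[OF T0] .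
  obtain t where t: "t \<in> Hom C X T0" using terminal_ex_hom[OF T0 X] by blast
  show "\<exists>!h. h \<in> Hom C X T"
  proof (rule ex1I)
    show "Cmp C X T0 T j t \<in> Hom C X T" using category_Cmp_in_Hom[OF C X T0obj T t j] .
    fix h assume h: "h \<in> Hom C X T"
    have "h = Cmp C X T T (Cmp C T T0 T j i) h"
      using category_Idm_left[OF C X T h] ji by simp
    also have "\<dots> = Cmp C X T0 T j (Cmp C X T T0 i h)"
      using category_Cmp_assoc[OF C X T T0obj T h i j] by simp
    also have "Cmp C X T T0 i h = t"
      by (rule terminal_hom_unique[OF T0 X category_Cmp_in_Hom[OF C X T T0obj h i] t])
    finally show "h = Cmp C X T0 T j t" .
  qed
qed

lemma product_hom_eqI:
  assumes C: "is_category C" and A: "A \<in> Obj C" and B: "B \<in> Obj C"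
    and P: "is_product C A B P p1 p2" and X: "X \<in> Obj C"
    and h: "h \<in> Hom C X P" and h': "h' \<in> Hom C X P"
    and "Cmp C X P A p1 h = Cmp C X P A p1 h'" and "Cmp C X P B p2 h = Cmp C X P B p2 h'"
  shows "h = h'"
proof -
  have "P \<in> Obj C" "p1 \<in> Hom C P A" "p2 \<in> Hom C P B" using product_parts[OF P] by blast+
  then have "Cmp C X P A p1 h \<in> Hom C X A" "Cmp C X P B p2 h \<in> Hom C X B"
    using category_Cmp_in_Hom[OF C X \<open>P \<in> Obj C\<close> A h] category_Cmp_in_Hom[OF C X \<open>P \<in> Obj C\<close> B h] by blast+
  from product_universal[OF P X this] show ?thesis
    by (rule ex1_unique) (use h h' assms(8,9) in simp_all)
qed

lemma product_comparison:
  assumes C: "is_category C" and A: "A \<in> Obj C" and B: "B \<in> Obj C"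
    and P: "is_product C A B P p1 p2" and P': "is_product C A B P' q1 q2"
  obtains i j where "i \<in> Hom C P P'" "j \<in> Hom C P' P"
    "Cmp C P P' A q1 i = p1" "Cmp C P P' B q2 i = p2"
    "Cmp C P' P A p1 j = q1" "Cmp C P' P B p2 j = q2"
    "Cmp C P P' P j i = Idm C P"
proof -
  have obj: "P \<in> Obj C" "P' \<in> Obj C"
    and p: "p1 \<in> Hom C P A" "p2 \<in> Hom C P B" and q: "q1 \<in> Hom C P' A" "q2 \<in> Hom C P' B"
    using product_parts[OF P] product_parts[OF P'] by blast+
  obtain i where i: "i \<in> Hom C P P'" "Cmp C P P' A q1 i = p1" "Cmp C P P' B q2 i = p2"
    using product_universal[OF P' obj(1) p] by blast
  obtain j where j: "j \<in> Hom C P' P" "Cmp C P' P A p1 j = q1" "Cmp C P' P B p2 j = q2"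
    using product_universal[OF P obj(2) q] by blast
  have "Cmp C P P' P j i = Idm C P"
  proof (rule product_hom_eqI[OF C A B P obj(1)])
    show "Cmp C P P' P j i \<in> Hom C P P" "Idm C P \<in> Hom C P P"
      by (rule category_Cmp_in_Hom[OF C obj(1) obj(2) obj(1) i(1) j(1)], rule category_Idm_in_Hom[OF C obj(1)])
    show "Cmp C P P A p1 (Cmp C P P' P j i) = Cmp C P P A p1 (Idm C P)"
      using category_Cmp_assoc[OF C obj(1) obj(2) obj(1) A i(1) j(1) p(1)] i j
        category_Idm_right[OF C obj(1) A p(1)] by simp
    show "Cmp C P P B p2 (Cmp C P P' P j i) = Cmp C P P B p2 (Idm C P)"
      using category_Cmp_assoc[OF C obj(1) obj(2) obj(1) B i(1) j(1) p(2)] i j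
        category_Idm_right[OF C obj(1) B p(2)] by simp
  qed
  with i j show ?thesis by (intro that)
qed

lemma product_retract:
  assumes C: "is_category C" and A: "A \<in> Obj C" and B: "B \<in> Obj C" and Pobj: "P \<in> Obj C"
    and P0: "is_product C A B P0 q1 q2"
    and i: "i \<in> Hom C P P0" and j: "j \<in> Hom C P0 P" and ji: "Cmp C P P0 P j i = Idm C P"
    and p1: "Cmp C P P0 A q1 i = p1" and p2: "Cmp C P P0 B q2 i = p2"
    and q1: "Cmp C P0 P A p1 j = q1" and q2: "Cmp C P0 P B p2 j = q2"
  shows "is_product C A B P p1 p2"
proof -
  have P0obj: "P0 \<in> Obj C" and q: "q1 \<in> Hom C P0 A" "q2 \<in> Hom C P0 B"
    using product_parts[OF P0] by blast+
  have p: "p1 \<in> Hom C P A" "p2 \<in> Hom C P B"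
    using category_Cmp_in_Hom[OF C Pobj P0obj A i q(1)] category_Cmp_in_Hom[OF C Pobj P0obj B i q(2)]
    by (simp_all add: p1 p2)
  show ?thesis
    unfolding is_product_def
  proof (intro conjI ballI Pobj p)
    fix X f g assume X: "X \<in> Obj C" and f: "f \<in> Hom C X A" and g: "g \<in> Hom C X B"
    obtain m where m: "m \<in> Hom C X P0" "Cmp C X P0 A q1 m = f" "Cmp C X P0 B q2 m = g"
      using product_universal[OF P0 X f g] by blast
    have jm: "Cmp C X P0 P j m \<in> Hom C X P" using category_Cmp_in_Hom[OF C X P0obj Pobj m(1) j] .
    show "\<exists>!h. h \<in> Hom C X P \<and> Cmp C X P A p1 h = f \<and> Cmp C X P B p2 h = g"
    proof (rule ex1I[of _ "Cmp C X P0 P j m"], intro conjI jm)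
      show "Cmp C X P A p1 (Cmp C X P0 P j m) = f" "Cmp C X P B p2 (Cmp C X P0 P j m) = g"
        using category_Cmp_assoc[OF C X P0obj Pobj A m(1) j p(1)]
          category_Cmp_assoc[OF C X P0obj Pobj B m(1) j p(2)] q1 q2 m by simp_all
      fix h assume "h \<in> Hom C X P \<and> Cmp C X P A p1 h = f \<and> Cmp C X P B p2 h = g"
      then have h: "h \<in> Hom C X P" and hf: "Cmp C X P A p1 h = f" and hg: "Cmp C X P B p2 h = g"
        by simp_all
      have ih: "Cmp C X P P0 i h = m"
      proof (rule product_hom_eqI[OF C A B P0 X category_Cmp_in_Hom[OF C X Pobj P0obj h i] m(1)])
        show "Cmp C X P0 A q1 (Cmp C X P P0 i h) = Cmp C X P0 A q1 m"
          using category_Cmp_assoc[OF C X Pobj P0obj A h i q(1)] hf p1 m by simp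
        show "Cmp C X P0 B q2 (Cmp C X P P0 i h) = Cmp C X P0 B q2 m"
          using category_Cmp_assoc[OF C X Pobj P0obj B h i q(2)] hg p2 m by simp
      qed
      have "h = Cmp C X P P (Cmp C P P0 P j i) h"
        using category_Idm_left[OF C X Pobj h] ji by simp
      also have "\<dots> = Cmp C X P0 P j m"
        using category_Cmp_assoc[OF C X Pobj P0obj Pobj h i j] ih by simp
      finally show "h = Cmp C X P0 P j m" .
    qed
  qed
qed

lemma functor_preserves_terminal:
  assumes F: "is_functor C D Fo Fm" and T0: "is_terminal C T0" and FT0: "is_terminal D (Fo T0)"
    and T: "is_terminal C T"
  shows "is_terminal D (Fo T)"
proof -
  have C: "is_category C" and D: "is_category D" using functor_categories[OF F] by simp_all
  have obj: "T \<in> Obj C" "T0 \<in> Obj C" using T T0 by (simp_all add: terminal_Obj)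
  obtain i j where i: "i \<in> Hom C T T0" and j: "j \<in> Hom C T0 T" and ji: "Cmp C T T0 T j i = Idm C T"
    using terminal_comparison[OF C T T0] .
  show ?thesis
  proof (rule terminal_retract[OF D FT0 functor_Obj[OF F obj(1)]
        functor_Hom[OF F obj i] functor_Hom[OF F obj(2,1) j]])
    show "Cmp D (Fo T) (Fo T0) (Fo T) (Fm T0 T j) (Fm T T0 i) = Idm D (Fo T)"
      using functor_Cmp[OF F obj(1,2,1) i j] functor_Idm[OF F obj(1)] ji by simp
  qed
qed

lemma functor_preserves_product:
  assumes F: "is_functor C D Fo Fm" and A: "A \<in> Obj C" and B: "B \<in> Obj C"
    and P0: "is_product C A B P0 q1 q2"
    and FP0: "is_product D (Fo A) (Fo B) (Fo P0) (Fm P0 A q1) (Fm P0 B q2)"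
    and P: "is_product C A B P p1 p2"
  shows "is_product D (Fo A) (Fo B) (Fo P) (Fm P A p1) (Fm P B p2)"
proof -
  have C: "is_category C" and D: "is_category D" using functor_categories[OF F] by simp_all
  have obj: "P \<in> Obj C" "P0 \<in> Obj C" and p: "p1 \<in> Hom C P A" "p2 \<in> Hom C P B"
    and q: "q1 \<in> Hom C P0 A" "q2 \<in> Hom C P0 B"
    using product_parts[OF P] product_parts[OF P0] by simp_all
  obtain i j where i: "i \<in> Hom C P P0" and j: "j \<in> Hom C P0 P"
    and qi: "Cmp C P P0 A q1 i = p1" "Cmp C P P0 B q2 i = p2"
    and pj: "Cmp C P0 P A p1 j = q1" "Cmp C P0 P B p2 j = q2"
    and ji: "Cmp C P P0 P j i = Idm C P"
    using product_comparison[OF C A B P P0] .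
  note FCmp = functor_Cmp[OF F]
  show ?thesis
  proof (rule product_retract[OF D functor_Obj[OF F A] functor_Obj[OF F B] functor_Obj[OF F obj(1)] FP0
        functor_Hom[OF F obj i] functor_Hom[OF F obj(2,1) j]])
    show "Cmp D (Fo P) (Fo P0) (Fo P) (Fm P0 P j) (Fm P P0 i) = Idm D (Fo P)"
      using FCmp[OF obj(1,2,1) i j] functor_Idm[OF F obj(1)] ji by simp
    show "Cmp D (Fo P) (Fo P0) (Fo A) (Fm P0 A q1) (Fm P P0 i) = Fm P A p1"
      "Cmp D (Fo P) (Fo P0) (Fo B) (Fm P0 B q2) (Fm P P0 i) = Fm P B p2"
      using FCmp[OF obj A i q(1)] FCmp[OF obj B i q(2)] qi by simp_all
    show "Cmp D (Fo P0) (Fo P) (Fo A) (Fm P A p1) (Fm P0 P j) = Fm P0 A q1"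
      "Cmp D (Fo P0) (Fo P) (Fo B) (Fm P B p2) (Fm P0 P j) = Fm P0 B q2"
      using FCmp[OF obj(2,1) A j p(1)] FCmp[OF obj(2,1) B j p(2)] pj by simp_all
  qed
qed

text \<open>\<open>h : X \<rightarrow> E\<close> is the exponential transpose of \<open>f : R \<rightarrow> B\<close>, where \<open>R\<close> is a product of \<open>X\<close> and \<open>A\<close>;
  the witness \<open>k : R \<rightarrow> P\<close> plays the role of \<open>h \<times> id\<^sub>A\<close>, exactly as in \<^const>\<open>is_exponential\<close>.\<close>
definition transposes ::
  "('o, 'm) cat \<Rightarrow> 'o \<Rightarrow> 'o \<Rightarrow> 'o \<Rightarrow> 'o \<Rightarrow> 'm \<Rightarrow> 'm \<Rightarrow> 'm \<Rightarrow>
   'o \<Rightarrow> 'o \<Rightarrow> 'm \<Rightarrow> 'm \<Rightarrow> 'm \<Rightarrow> 'm \<Rightarrow> 'm \<Rightarrow> bool" where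
  "transposes C A B E P p1 p2 ev X R r1 r2 f h k \<longleftrightarrow>
     h \<in> Hom C X E \<and> k \<in> Hom C R P \<and> Cmp C R P E p1 k = Cmp C R X E h r1 \<and>
     Cmp C R P A p2 k = r2 \<and> Cmp C R P B ev k = f"

lemma is_exponential_iff_transposes:
  "is_exponential C A B E P p1 p2 ev \<longleftrightarrow>
     E \<in> Obj C \<and> is_product C E A P p1 p2 \<and> ev \<in> Hom C P B \<and>
     (\<forall>X\<in>Obj C. \<forall>R r1 r2. is_product C X A R r1 r2 \<longrightarrow>
        (\<forall>f\<in>Hom C R B. \<exists>!h. \<exists>k. transposes C A B E P p1 p2 ev X R r1 r2 f h k))"
  unfolding is_exponential_def transposes_def Bex_def by simp

lemma exponential_parts:
  "is_exponential C A B E P p1 p2 ev \<Longrightarrow> E \<in> Obj C \<and> is_product C E A P p1 p2 \<and> ev \<in> Hom C P B"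
  unfolding is_exponential_def by blast

lemma exponential_universal:
  "is_exponential C A B E P p1 p2 ev \<Longrightarrow> X \<in> Obj C \<Longrightarrow> is_product C X A R r1 r2 \<Longrightarrow> f \<in> Hom C R B \<Longrightarrow>
   \<exists>!h. \<exists>k. transposes C A B E P p1 p2 ev X R r1 r2 f h k"
  unfolding is_exponential_iff_transposes by blast

lemma exponential_transpose_unique:
  assumes "is_exponential C A B E P p1 p2 ev" and "X \<in> Obj C" and "is_product C X A R r1 r2"
    and "f \<in> Hom C R B"
    and "transposes C A B E P p1 p2 ev X R r1 r2 f h k" and "transposes C A B E P p1 p2 ev X R r1 r2 f h' k'"
  shows "h = h'"
  using exponential_universal[OF assms(1-4)] by (rule ex1_unique) (use assms(5,6) in blast)+

lemma transposes_Idm: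
  assumes C: "is_category C" and A: "A \<in> Obj C" and B: "B \<in> Obj C" and E: "E \<in> Obj C"
    and P: "is_product C E A P p1 p2" and ev: "ev \<in> Hom C P B"
  shows "transposes C A B E P p1 p2 ev E P p1 p2 ev (Idm C E) (Idm C P)"
  using product_parts[OF P] category_Idm_in_Hom[OF C] category_Idm_left[OF C] category_Idm_right[OF C] A B E ev
  unfolding transposes_def by simp

lemma transposes_Cmp:
  assumes C: "is_category C" and objs: "A \<in> Obj C" "B \<in> Obj C" "X \<in> Obj C" "E \<in> Obj C" "E' \<in> Obj C"
    and R: "is_product C X A R r1 r2" and P: "is_product C E A P p1 p2" and P': "is_product C E' A P' p1' p2'"
    and ev': "ev' \<in> Hom C P' B"
    and hk: "transposes C A B E P p1 p2 ev X R r1 r2 f h k"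
    and wm: "transposes C A B E' P' p1' p2' ev' E P p1 p2 ev w m"
  shows "transposes C A B E' P' p1' p2' ev' X R r1 r2 f (Cmp C X E E' w h) (Cmp C R P P' m k)"
proof -
  have R': "R \<in> Obj C" "r1 \<in> Hom C R X" "r2 \<in> Hom C R A" using product_parts[OF R] by simp_all
  have PP: "P \<in> Obj C" "p1 \<in> Hom C P E" "p2 \<in> Hom C P A" "P' \<in> Obj C" "p1' \<in> Hom C P' E'" "p2' \<in> Hom C P' A"
    using product_parts[OF P] product_parts[OF P'] by simp_all
  have h: "h \<in> Hom C X E" and k: "k \<in> Hom C R P" and hk1: "Cmp C R P E p1 k = Cmp C R X E h r1"
    and hk2: "Cmp C R P A p2 k = r2" and hk3: "Cmp C R P B ev k = f"
    using hk unfolding transposes_def by simp_all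
  have w: "w \<in> Hom C E E'" and m: "m \<in> Hom C P P'" and wm1: "Cmp C P P' E' p1' m = Cmp C P E E' w p1"
    and wm2: "Cmp C P P' A p2' m = p2" and wm3: "Cmp C P P' B ev' m = ev"
    using wm unfolding transposes_def by simp_all
  note assoc = category_Cmp_assoc[OF C]
  have "Cmp C R P' E' p1' (Cmp C R P P' m k) = Cmp C R P E' (Cmp C P E E' w p1) k"
    using assoc[OF R'(1) PP(1) PP(4) objs(5) k m PP(5)] wm1 by simp
  also have "\<dots> = Cmp C R X E' (Cmp C X E E' w h) r1"
    using assoc[OF R'(1) PP(1) objs(4) objs(5) k PP(2) w] assoc[OF R'(1) objs(3) objs(4) objs(5) R'(2) h w] hk1
    by simp
  finally have 1: "Cmp C R P' E' p1' (Cmp C R P P' m k) = Cmp C R X E' (Cmp C X E E' w h) r1" .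
  have 2: "Cmp C R P' A p2' (Cmp C R P P' m k) = r2"
    using assoc[OF R'(1) PP(1) PP(4) objs(1) k m PP(6)] wm2 hk2 by simp
  have 3: "Cmp C R P' B ev' (Cmp C R P P' m k) = f"
    using assoc[OF R'(1) PP(1) PP(4) objs(2) k m ev'] wm3 hk3 by simp
  show ?thesis unfolding transposes_def
    using 1 2 3 category_Cmp_in_Hom[OF C objs(3) objs(4) objs(5) h w]
      category_Cmp_in_Hom[OF C R'(1) PP(1) PP(4) k m] by simp
qed

lemma transposes_precomp:
  assumes C: "is_category C" and objs: "A \<in> Obj C" "B \<in> Obj C" "X \<in> Obj C" "E \<in> Obj C"
    and R: "is_product C X A R r1 r2" and R': "R' \<in> Obj C" and P: "is_product C E A P p1 p2"
    and hk: "transposes C A B E P p1 p2 ev X R r1 r2 f h k"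
    and j: "j \<in> Hom C R' R" and j1: "Cmp C R' R X r1 j = r1'" and j2: "Cmp C R' R A r2 j = r2'"
    and ev: "ev \<in> Hom C P B"
  shows "transposes C A B E P p1 p2 ev X R' r1' r2' (Cmp C R' R B f j) h (Cmp C R' R P k j)"
proof -
  have Rp: "R \<in> Obj C" "r1 \<in> Hom C R X" "r2 \<in> Hom C R A" using product_parts[OF R] by simp_all
  have Pp: "P \<in> Obj C" "p1 \<in> Hom C P E" "p2 \<in> Hom C P A" using product_parts[OF P] by simp_all
  have h: "h \<in> Hom C X E" and k: "k \<in> Hom C R P" and hk1: "Cmp C R P E p1 k = Cmp C R X E h r1"
    and hk2: "Cmp C R P A p2 k = r2" and hk3: "Cmp C R P B ev k = f"
    using hk unfolding transposes_def by simp_all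
  note assoc = category_Cmp_assoc[OF C R' Rp(1)]
  show ?thesis unfolding transposes_def
    using assoc[OF Pp(1) objs(4) j k Pp(2)] assoc[OF objs(3) objs(4) j Rp(2) h]
      assoc[OF Pp(1) objs(1) j k Pp(3)] assoc[OF Pp(1) objs(2) j k ev]
      category_Cmp_in_Hom[OF C R' Rp(1) Pp(1) j k] h hk1 hk2 hk3 j1 j2
    by simp
qed

lemma exponential_comparison:
  assumes C: "is_category C" and A: "A \<in> Obj C" and B: "B \<in> Obj C"
    and E: "is_exponential C A B E P p1 p2 ev" and E0: "is_exponential C A B E0 P0 q1 q2 ev0"
  obtains u ku v kv where "transposes C A B E P p1 p2 ev E0 P0 q1 q2 ev0 u ku"
    "transposes C A B E0 P0 q1 q2 ev0 E P p1 p2 ev v kv" "Cmp C E E0 E u v = Idm C E"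
proof -
  have Ep: "E \<in> Obj C" "is_product C E A P p1 p2" "ev \<in> Hom C P B"
    and E0p: "E0 \<in> Obj C" "is_product C E0 A P0 q1 q2" "ev0 \<in> Hom C P0 B"
    using exponential_parts[OF E] exponential_parts[OF E0] by simp_all
  obtain v kv where vk: "transposes C A B E0 P0 q1 q2 ev0 E P p1 p2 ev v kv"
    using exponential_universal[OF E0 Ep] by blast
  obtain u ku where uk: "transposes C A B E P p1 p2 ev E0 P0 q1 q2 ev0 u ku"
    using exponential_universal[OF E E0p] by blast
  have "Cmp C E E0 E u v = Idm C E"
  proof (rule exponential_transpose_unique[OF E Ep])
    show "transposes C A B E P p1 p2 ev E P p1 p2 ev (Cmp C E E0 E u v) (Cmp C P P0 P ku kv)"
      by (rule transposes_Cmp[OF C A B Ep(1) E0p(1) Ep(1) Ep(2) E0p(2) Ep(2) Ep(3) vk uk])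
    show "transposes C A B E P p1 p2 ev E P p1 p2 ev (Idm C E) (Idm C P)"
      by (rule transposes_Idm[OF C A B Ep])
  qed
  with uk vk show ?thesis by (rule that)
qed

lemma exponential_retract:
  assumes C: "is_category C" and A: "A \<in> Obj C" and B: "B \<in> Obj C" and Eobj: "E \<in> Obj C"
    and E0: "is_exponential C A B E0 P0 q1 q2 ev0"
    and P: "is_product C E A P p1 p2" and ev: "ev \<in> Hom C P B"
    and uk: "transposes C A B E P p1 p2 ev E0 P0 q1 q2 ev0 u ku"
    and vk: "transposes C A B E0 P0 q1 q2 ev0 E P p1 p2 ev v kv"
    and uv: "Cmp C E E0 E u v = Idm C E"
  shows "is_exponential C A B E P p1 p2 ev"
  unfolding is_exponential_iff_transposes
proof (intro conjI ballI allI impI Eobj P ev)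
  have E0p: "E0 \<in> Obj C" "is_product C E0 A P0 q1 q2" using exponential_parts[OF E0] by simp_all
  have u: "u \<in> Hom C E0 E" and v: "v \<in> Hom C E E0" using uk vk unfolding transposes_def by simp_all
  fix X R r1 r2 f assume X: "X \<in> Obj C" and R: "is_product C X A R r1 r2" and f: "f \<in> Hom C R B"
  obtain h0 k0 where hk0: "transposes C A B E0 P0 q1 q2 ev0 X R r1 r2 f h0 k0"
    using exponential_universal[OF E0 X R f] by blast
  show "\<exists>!h. \<exists>k. transposes C A B E P p1 p2 ev X R r1 r2 f h k"
  proof (rule ex1I)
    show "\<exists>k. transposes C A B E P p1 p2 ev X R r1 r2 f (Cmp C X E0 E u h0) k"
      using transposes_Cmp[OF C A B X E0p(1) Eobj R E0p(2) P ev hk0 uk] by blast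
    fix h assume "\<exists>k. transposes C A B E P p1 p2 ev X R r1 r2 f h k"
    then obtain k where hk: "transposes C A B E P p1 p2 ev X R r1 r2 f h k" ..
    have h: "h \<in> Hom C X E" using hk unfolding transposes_def by simp
    have "Cmp C X E E0 v h = h0"
      using exponential_transpose_unique[OF E0 X R f
          transposes_Cmp[OF C A B X Eobj E0p(1) R P E0p(2) _ hk vk] hk0] exponential_parts[OF E0]
      by blast
    then show "h = Cmp C X E0 E u h0"
      using category_Cmp_assoc[OF C X Eobj E0p(1) Eobj h v u] category_Idm_left[OF C X Eobj h] uv by simp
  qed
qed

lemma functor_transposes:
  assumes F: "is_functor C D Fo Fm"
    and objs: "A \<in> Obj C" "B \<in> Obj C" "E \<in> Obj C" "P \<in> Obj C" "X \<in> Obj C" "R \<in> Obj C"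
    and homs: "p1 \<in> Hom C P E" "p2 \<in> Hom C P A" "ev \<in> Hom C P B" "r1 \<in> Hom C R X"
    and hk: "transposes C A B E P p1 p2 ev X R r1 r2 f h k"
  shows "transposes D (Fo A) (Fo B) (Fo E) (Fo P) (Fm P E p1) (Fm P A p2) (Fm P B ev)
           (Fo X) (Fo R) (Fm R X r1) (Fm R A r2) (Fm R B f) (Fm X E h) (Fm R P k)"
proof -
  have h: "h \<in> Hom C X E" and k: "k \<in> Hom C R P" and eqs: "Cmp C R P E p1 k = Cmp C R X E h r1"
    "Cmp C R P A p2 k = r2" "Cmp C R P B ev k = f"
    using hk unfolding transposes_def by simp_all
  show ?thesis
    unfolding transposes_def
    using functor_Hom[OF F objs(5,3) h] functor_Hom[OF F objs(6,4) k]
      functor_Cmp[OF F objs(6,4,3) k homs(1)] functor_Cmp[OF F objs(6,5,3) homs(4) h]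
      functor_Cmp[OF F objs(6,4,1) k homs(2)] functor_Cmp[OF F objs(6,4,2) k homs(3)] eqs
    by simp
qed

lemma functor_preserves_exponential:
  assumes F: "is_functor C D Fo Fm" and A: "A \<in> Obj C" and B: "B \<in> Obj C"
    and products: "\<And>X Y Q q1 q2. X \<in> Obj C \<Longrightarrow> Y \<in> Obj C \<Longrightarrow> is_product C X Y Q q1 q2 \<Longrightarrow>
       is_product D (Fo X) (Fo Y) (Fo Q) (Fm Q X q1) (Fm Q Y q2)"
    and E0: "is_exponential C A B E0 P0 q1 q2 ev0"
    and FE0: "is_exponential D (Fo A) (Fo B) (Fo E0) (Fo P0) (Fm P0 E0 q1) (Fm P0 A q2) (Fm P0 B ev0)"
    and E: "is_exponential C A B E P p1 p2 ev"
  shows "is_exponential D (Fo A) (Fo B) (Fo E) (Fo P) (Fm P E p1) (Fm P A p2) (Fm P B ev)"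
proof -
  have C: "is_category C" and D: "is_category D" using functor_categories[OF F] by simp_all
  have Ep: "E \<in> Obj C" "is_product C E A P p1 p2" "ev \<in> Hom C P B"
    and E0p: "E0 \<in> Obj C" "is_product C E0 A P0 q1 q2" "ev0 \<in> Hom C P0 B"
    using exponential_parts[OF E] exponential_parts[OF E0] by simp_all
  have Pp: "P \<in> Obj C" "p1 \<in> Hom C P E" "p2 \<in> Hom C P A"
    and P0p: "P0 \<in> Obj C" "q1 \<in> Hom C P0 E0" "q2 \<in> Hom C P0 A"
    using product_parts[OF Ep(2)] product_parts[OF E0p(2)] by simp_all
  obtain u ku v kv where uk: "transposes C A B E P p1 p2 ev E0 P0 q1 q2 ev0 u ku"
    and vk: "transposes C A B E0 P0 q1 q2 ev0 E P p1 p2 ev v kv" and uv: "Cmp C E E0 E u v = Idm C E"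
    using exponential_comparison[OF C A B E E0] .
  have u: "u \<in> Hom C E0 E" and v: "v \<in> Hom C E E0" using uk vk unfolding transposes_def by simp_all
  show ?thesis
  proof (rule exponential_retract[OF D functor_Obj[OF F A] functor_Obj[OF F B] functor_Obj[OF F Ep(1)] FE0
        products[OF Ep(1) A Ep(2)] functor_Hom[OF F Pp(1) B Ep(3)]])
    show "transposes D (Fo A) (Fo B) (Fo E) (Fo P) (Fm P E p1) (Fm P A p2) (Fm P B ev)
        (Fo E0) (Fo P0) (Fm P0 E0 q1) (Fm P0 A q2) (Fm P0 B ev0) (Fm E0 E u) (Fm P0 P ku)"
      by (rule functor_transposes[OF F A B Ep(1) Pp(1) E0p(1) P0p(1) Pp(2,3) Ep(3) P0p(2) uk])
    show "transposes D (Fo A) (Fo B) (Fo E0) (Fo P0) (Fm P0 E0 q1) (Fm P0 A q2) (Fm P0 B ev0)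
        (Fo E) (Fo P) (Fm P E p1) (Fm P A p2) (Fm P B ev) (Fm E E0 v) (Fm P P0 kv)"
      by (rule functor_transposes[OF F A B E0p(1) P0p(1) Ep(1) Pp(1) P0p(2,3) E0p(3) Pp(2) vk])
    show "Cmp D (Fo E) (Fo E0) (Fo E) (Fm E0 E u) (Fm E E0 v) = Idm D (Fo E)"
      using functor_Cmp[OF F Ep(1) E0p(1) Ep(1) v u] functor_Idm[OF F Ep(1)] uv by simp
  qed
qed

lemma is_exponentialI:
  assumes C: "is_category C" and A: "A \<in> Obj C" and B: "B \<in> Obj C" and Eobj: "E \<in> Obj C"
    and P: "is_product C E A P p1 p2" and ev: "ev \<in> Hom C P B"
    and chosen: "\<And>X. X \<in> Obj C \<Longrightarrow> is_product C X A (Pr X) (\<pi>\<^sub>1 X) (\<pi>\<^sub>2 X)"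
    and transpose: "\<And>X f. X \<in> Obj C \<Longrightarrow> f \<in> Hom C (Pr X) B \<Longrightarrow>
       \<exists>!h. \<exists>k. transposes C A B E P p1 p2 ev X (Pr X) (\<pi>\<^sub>1 X) (\<pi>\<^sub>2 X) f h k"
  shows "is_exponential C A B E P p1 p2 ev"
  unfolding is_exponential_iff_transposes
proof (intro conjI ballI allI impI Eobj P ev)
  fix X R r1 r2 f assume X: "X \<in> Obj C" and R: "is_product C X A R r1 r2" and f: "f \<in> Hom C R B"
  have Robj: "R \<in> Obj C" and PrX: "Pr X \<in> Obj C" using product_parts[OF R] product_parts[OF chosen[OF X]] by simp_all
  obtain i j where i: "i \<in> Hom C R (Pr X)" and j: "j \<in> Hom C (Pr X) R"
    and \<pi>i: "Cmp C R (Pr X) X (\<pi>\<^sub>1 X) i = r1" "Cmp C R (Pr X) A (\<pi>\<^sub>2 X) i = r2"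
    and rj: "Cmp C (Pr X) R X r1 j = \<pi>\<^sub>1 X" "Cmp C (Pr X) R A r2 j = \<pi>\<^sub>2 X"
    and ji: "Cmp C R (Pr X) R j i = Idm C R"
    using product_comparison[OF C X A R chosen[OF X]] .
  have fj: "Cmp C (Pr X) R B f j \<in> Hom C (Pr X) B" using category_Cmp_in_Hom[OF C PrX Robj B j f] .
  obtain h k where hk: "transposes C A B E P p1 p2 ev X (Pr X) (\<pi>\<^sub>1 X) (\<pi>\<^sub>2 X) (Cmp C (Pr X) R B f j) h k"
    using transpose[OF X fj] by blast
  have fji: "Cmp C R (Pr X) B (Cmp C (Pr X) R B f j) i = f"
    using category_Cmp_assoc[OF C Robj PrX Robj B i j f] category_Idm_right[OF C Robj B f] ji by simp
  show "\<exists>!h. \<exists>k. transposes C A B E P p1 p2 ev X R r1 r2 f h k"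
  proof (rule ex1I)
    show "\<exists>k. transposes C A B E P p1 p2 ev X R r1 r2 f h k"
      using transposes_precomp[OF C A B X Eobj chosen[OF X] Robj P hk i \<pi>i ev] fji by auto
    fix h' assume "\<exists>k. transposes C A B E P p1 p2 ev X R r1 r2 f h' k"
    then obtain k' where "transposes C A B E P p1 p2 ev X R r1 r2 f h' k'" ..
    from transposes_precomp[OF C A B X Eobj R PrX P this j rj ev]
    show "h' = h"
      using transpose[OF X fj] hk by (blast intro: ex1_unique)
  qed
qed

lemma cc_functorI:
  assumes F: "is_functor C D Fo Fm"
    and terminal: "is_terminal C T" "is_terminal D (Fo T)"
    and products: "\<And>A B. A \<in> Obj C \<Longrightarrow> B \<in> Obj C \<Longrightarrow> \<exists>P p1 p2. is_product C A B P p1 p2 \<and>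
       is_product D (Fo A) (Fo B) (Fo P) (Fm P A p1) (Fm P B p2)"
    and exponentials: "\<And>A B. A \<in> Obj C \<Longrightarrow> B \<in> Obj C \<Longrightarrow> \<exists>E P p1 p2 ev. is_exponential C A B E P p1 p2 ev \<and>
       is_exponential D (Fo A) (Fo B) (Fo E) (Fo P) (Fm P E p1) (Fm P A p2) (Fm P B ev)"
  shows "cc_functor C D Fo Fm"
proof -
  have product_preservation: "is_product D (Fo A) (Fo B) (Fo P) (Fm P A p1) (Fm P B p2)"
    if "A \<in> Obj C" "B \<in> Obj C" "is_product C A B P p1 p2" for A B P p1 p2
    using products[OF that(1,2)] functor_preserves_product[OF F that(1,2) _ _ that(3)] by blast
  have "is_exponential D (Fo A) (Fo B) (Fo E) (Fo P) (Fm P E p1) (Fm P A p2) (Fm P B ev)"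
    if "A \<in> Obj C" "B \<in> Obj C" "is_exponential C A B E P p1 p2 ev" for A B E P p1 p2 ev
    using exponentials[OF that(1,2)]
      functor_preserves_exponential[OF F that(1,2) product_preservation _ _ that(3)] by blast
  with product_preservation show ?thesis
    unfolding cc_functor_def using F functor_preserves_terminal[OF F terminal] by blast
qed

section \<open>Simply typed terms and beta-eta equality\<close>

lemma typing_VarI: "i < length \<Gamma> \<Longrightarrow> \<Gamma> ! i = T \<Longrightarrow> typing \<Gamma> (TVar i) T"
  using typing.t_var by blast

lemma typing_TVar_iff [simp]: "typing \<Gamma> (TVar i) T \<longleftrightarrow> i < length \<Gamma> \<and> \<Gamma> ! i = T"
  by (auto intro: typing_VarI elim: typing.cases)

lemma typing_append: "typing \<Gamma> M A \<Longrightarrow> typing (\<Gamma> @ \<Delta>) M A"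
proof (induction rule: typing.induct)
  case (t_var i \<Gamma>)
  then show ?case by (intro typing_VarI) (auto simp: nth_append)
qed (auto intro: typing.intros)

lemma typing_closed: "typing [] M T \<Longrightarrow> typing \<Gamma> M T"
  using typing_append[of "[]" M T \<Gamma>] by simp

lemma typing_lift:
  "typing \<Gamma> M A \<Longrightarrow> \<Gamma> = \<Gamma>\<^sub>1 @ \<Gamma>\<^sub>2 \<Longrightarrow> length \<Gamma>\<^sub>1 = k \<Longrightarrow> typing (\<Gamma>\<^sub>1 @ B # \<Gamma>\<^sub>2) (lift k M) A"
proof (induction arbitrary: k \<Gamma>\<^sub>1 rule: typing.induct)
  case (t_var i \<Gamma>)
  then show ?case
    by (cases "i < k") (auto intro!: typing_VarI simp: nth_append Suc_diff_le)
next
  case (t_abs A \<Gamma> M C)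
  have "typing ((A # \<Gamma>\<^sub>1) @ B # \<Gamma>\<^sub>2) (lift (Suc k) M) C"
    by (rule t_abs.IH) (use t_abs.prems in auto)
  then show ?case by (auto intro: typing.intros)
qed (fastforce intro: typing.intros)+

lemma typing_lift0: "typing \<Gamma> M A \<Longrightarrow> typing (B # \<Gamma>) (lift 0 M) A"
  using typing_lift[of \<Gamma> M A "[]"] by simp

lemma typing_subst:
  "typing \<Gamma> M T \<Longrightarrow> \<Gamma> = \<Gamma>\<^sub>1 @ A # \<Gamma>\<^sub>2 \<Longrightarrow> length \<Gamma>\<^sub>1 = k \<Longrightarrow> typing (\<Gamma>\<^sub>1 @ \<Gamma>\<^sub>2) N A
   \<Longrightarrow> typing (\<Gamma>\<^sub>1 @ \<Gamma>\<^sub>2) (subst M k N) T"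
proof (induction arbitrary: k \<Gamma>\<^sub>1 N rule: typing.induct)
  case (t_var i \<Gamma>)
  consider "i < k" | "i = k" | "i > k" by linarith
  then show ?case
  proof cases
    case 3
    then obtain j where "i = Suc j" "j \<ge> k" by (cases i) auto
    then show ?thesis using t_var by (auto intro!: typing_VarI simp: nth_append Suc_diff_le)
  qed (use t_var in \<open>auto simp: nth_append intro!: typing_VarI\<close>)
next
  case (t_abs C \<Gamma> M B)
  have "typing ((C # \<Gamma>\<^sub>1) @ \<Gamma>\<^sub>2) (subst M (Suc k) (lift 0 N)) B"
    by (rule t_abs.IH) (use t_abs.prems typing_lift0 in auto)
  then show ?case by (auto intro: typing.intros)
qed (fastforce intro: typing.intros)+

lemma typing_subst0: "typing (A # \<Gamma>) M T \<Longrightarrow> typing \<Gamma> N A \<Longrightarrow> typing \<Gamma> (subst M 0 N) T"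
  using typing_subst[of "A # \<Gamma>" M T "[]"] by simp

lemma lift_closed: "typing [] M T \<Longrightarrow> lift k M = M"
proof -
  have "typing \<Gamma> M T \<Longrightarrow> length \<Gamma> \<le> k \<Longrightarrow> lift k M = M" for \<Gamma> k
    by (induction arbitrary: k rule: typing.induct) auto
  then show "typing [] M T \<Longrightarrow> lift k M = M" by simp
qed

lemma subst_closed: "typing [] M T \<Longrightarrow> subst M k N = M"
proof -
  have "typing \<Gamma> M T \<Longrightarrow> length \<Gamma> \<le> k \<Longrightarrow> subst M k N = M" for \<Gamma> k N
    by (induction arbitrary: k N rule: typing.induct) auto
  then show "typing [] M T \<Longrightarrow> subst M k N = M" by simp
qed

lemma subst_lift: "subst (lift k M) k N = M"
  by (induction M arbitrary: k N) auto

lemma typing_app_closed: "typing [] M (TyArr A B) \<Longrightarrow> typing \<Gamma> x A \<Longrightarrow> typing \<Gamma> (TApp M x) B"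
  by (rule typing.t_app) (rule typing_closed)

lemma beq_typing: "beq \<Gamma> M N A \<Longrightarrow> typing \<Gamma> M A \<and> typing \<Gamma> N A"
proof (induction rule: beq.induct)
  case (beq_beta A \<Gamma> M B N)
  then show ?case using typing_subst0 by (auto intro: typing.intros)
next
  case (beq_eta \<Gamma> M A B)
  then show ?case by (auto intro!: typing.intros typing_lift0)
qed (auto intro: typing.intros)

lemma beq_append: "beq \<Gamma> M N A \<Longrightarrow> beq (\<Gamma> @ \<Delta>) M N A"
proof (induction rule: beq.induct)
  case (beq_abs A \<Gamma> M M' B)
  then show ?case using beq.beq_abs[of A "\<Gamma> @ \<Delta>"] by simp
next
  case (beq_beta A \<Gamma> M B N)
  then show ?case using beq.beq_beta[of A "\<Gamma> @ \<Delta>"] typing_append by fastforce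
qed (auto intro: beq.intros typing_append)

lemma beq_closed: "beq [] M N T \<Longrightarrow> beq \<Gamma> M N T"
  using beq_append[of "[]" M N T \<Gamma>] by simp

lemma beq_appL: "beq \<Gamma> M M' (TyArr A B) \<Longrightarrow> typing \<Gamma> N A \<Longrightarrow> beq \<Gamma> (TApp M N) (TApp M' N) B"
  by (rule beq_app) (auto intro: beq_refl)

lemma beq_appR: "typing \<Gamma> M (TyArr A B) \<Longrightarrow> beq \<Gamma> N N' A \<Longrightarrow> beq \<Gamma> (TApp M N) (TApp M N') B"
  by (rule beq_app) (auto intro: beq_refl)

lemma beq_ext_ctx:
  assumes "typing \<Gamma> M (TyArr A B)" and "typing \<Gamma> M' (TyArr A B)"
    and "beq (A # \<Gamma>) (TApp (lift 0 M) (TVar 0)) (TApp (lift 0 M') (TVar 0)) B"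
  shows "beq \<Gamma> M M' (TyArr A B)"
  using assms by (meson beq_abs beq_eta beq_sym beq_trans)

lemma beq_ext:
  assumes "typing [] M (TyArr A B)" and "typing [] M' (TyArr A B)"
    and "beq [A] (TApp M (TVar 0)) (TApp M' (TVar 0)) B"
  shows "beq [] M M' (TyArr A B)"
  using assms by (intro beq_ext_ctx) (simp_all add: lift_closed)

lemma beq_ext2:
  assumes M: "typing [] M (TyArr X (TyArr A B))" and M': "typing [] M' (TyArr X (TyArr A B))"
    and "beq [A, X] (TApp (TApp M (TVar 1)) (TVar 0)) (TApp (TApp M' (TVar 1)) (TVar 0)) B"
  shows "beq [] M M' (TyArr X (TyArr A B))"
proof (rule beq_ext[OF M M'], rule beq_ext_ctx)
  show "typing [X] (TApp M (TVar 0)) (TyArr A B)" "typing [X] (TApp M' (TVar 0)) (TyArr A B)"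
    using M M' by (simp_all add: typing_app_closed)
qed (use assms in \<open>simp add: lift_closed\<close>)

declare beq_trans [trans]

text \<open>As in \<^const>\<open>comp_tm\<close>, term arguments are
  lifted past the new binders, which makes their meaning in the model depend only on the meaning
  of the arguments.\<close>

definition fst_tm :: "ty \<Rightarrow> ty \<Rightarrow> tm" where
  "fst_tm A B = TAbs (TyProd A B) (TFst (TVar 0))"

definition snd_tm :: "ty \<Rightarrow> ty \<Rightarrow> tm" where
  "snd_tm A B = TAbs (TyProd A B) (TSnd (TVar 0))"

definition pair_tm :: "ty \<Rightarrow> tm \<Rightarrow> tm \<Rightarrow> tm" where
  "pair_tm X F G = TAbs X (TPair (TApp (lift 0 F) (TVar 0)) (TApp (lift 0 G) (TVar 0)))"

definition unit_tm :: "ty \<Rightarrow> tm" where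
  "unit_tm X = TAbs X TUnit"

definition ev_tm :: "ty \<Rightarrow> ty \<Rightarrow> tm" where
  "ev_tm A B = TAbs (TyProd (TyArr A B) A) (TApp (TFst (TVar 0)) (TSnd (TVar 0)))"

definition cur_tm :: "ty \<Rightarrow> ty \<Rightarrow> tm \<Rightarrow> tm" where
  "cur_tm X A F = TAbs X (TAbs A (TApp (lift 0 (lift 0 F)) (TPair (TVar 1) (TVar 0))))"

definition times_id_tm :: "ty \<Rightarrow> ty \<Rightarrow> tm \<Rightarrow> tm" where
  "times_id_tm X A H = pair_tm (TyProd X A) (comp_tm (TyProd X A) (fst_tm X A) H) (snd_tm X A)"

lemma typing_id_tm [intro]: "typing [] (id_tm A) (TyArr A A)"
  unfolding id_tm_def by (rule typing.t_abs) simp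

lemma typing_comp_tm [intro]:
  "typing [] M (TyArr A B) \<Longrightarrow> typing [] N (TyArr B C) \<Longrightarrow> typing [] (comp_tm A M N) (TyArr A C)"
  unfolding comp_tm_def
  by (simp add: lift_closed typing.t_abs typing_app_closed)

lemma typing_fst_tm [intro]: "typing [] (fst_tm A B) (TyArr (TyProd A B) A)"
  unfolding fst_tm_def by (rule typing.t_abs, rule typing.t_fst[where B = B]) simp

lemma typing_snd_tm [intro]: "typing [] (snd_tm A B) (TyArr (TyProd A B) B)"
  unfolding snd_tm_def by (rule typing.t_abs, rule typing.t_snd[where A = A]) simp

lemma typing_pair_tm [intro]:
  "typing [] F (TyArr X A) \<Longrightarrow> typing [] G (TyArr X B) \<Longrightarrow> typing [] (pair_tm X F G) (TyArr X (TyProd A B))"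
  unfolding pair_tm_def
  by (simp add: lift_closed typing.t_abs typing.t_pair typing_app_closed)

lemma typing_unit_tm [intro]: "typing [] (unit_tm X) (TyArr X TyOne)"
  unfolding unit_tm_def by (rule typing.t_abs, rule typing.t_unit)

lemma typing_ev_tm [intro]: "typing [] (ev_tm A B) (TyArr (TyProd (TyArr A B) A) B)"
  unfolding ev_tm_def
  by (rule typing.t_abs, rule typing.t_app, rule typing.t_fst[where B = A], simp,
      rule typing.t_snd[where A = "TyArr A B"], simp)

lemma typing_cur_tm [intro]:
  "typing [] F (TyArr (TyProd X A) B) \<Longrightarrow> typing [] (cur_tm X A F) (TyArr X (TyArr A B))"
  unfolding cur_tm_def
  by (simp add: lift_closed typing.t_abs typing.t_pair typing_app_closed)

lemma typing_times_id_tm [intro]: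
  "typing [] H (TyArr X Y) \<Longrightarrow> typing [] (times_id_tm X A H) (TyArr (TyProd X A) (TyProd Y A))"
  unfolding times_id_tm_def by blast

lemma beta_id: "typing \<Gamma> x A \<Longrightarrow> beq \<Gamma> (TApp (id_tm A) x) x A"
  using beq_beta[of A \<Gamma> "TVar 0" A x] by (simp add: id_tm_def)

lemma beta_comp:
  assumes "typing [] M (TyArr A B)" and "typing [] N (TyArr B C)" and "typing \<Gamma> x A"
  shows "beq \<Gamma> (TApp (comp_tm A M N) x) (TApp N (TApp M x)) C"
  using beq_beta[of A \<Gamma> "TApp N (TApp M (TVar 0))" C x] assms
  by (simp add: comp_tm_def subst_closed lift_closed typing_app_closed)

lemma beta_fst: "typing \<Gamma> p (TyProd A B) \<Longrightarrow> beq \<Gamma> (TApp (fst_tm A B) p) (TFst p) A"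
  using beq_beta[of "TyProd A B" \<Gamma> "TFst (TVar 0)" A p] by (simp add: fst_tm_def typing.t_fst[where B = B])

lemma beta_snd: "typing \<Gamma> p (TyProd A B) \<Longrightarrow> beq \<Gamma> (TApp (snd_tm A B) p) (TSnd p) B"
  using beq_beta[of "TyProd A B" \<Gamma> "TSnd (TVar 0)" B p] by (simp add: snd_tm_def typing.t_snd[where A = A])

lemma beta_pair:
  assumes "typing [] F (TyArr X A)" and "typing [] G (TyArr X B)" and "typing \<Gamma> x X"
  shows "beq \<Gamma> (TApp (pair_tm X F G) x) (TPair (TApp F x) (TApp G x)) (TyProd A B)"
  using beq_beta[of X \<Gamma> "TPair (TApp F (TVar 0)) (TApp G (TVar 0))" "TyProd A B" x] assms
  by (simp add: pair_tm_def subst_closed lift_closed typing.t_pair typing_app_closed)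

lemma beta_ev:
  assumes "typing \<Gamma> f (TyArr A B)" and "typing \<Gamma> a A"
  shows "beq \<Gamma> (TApp (ev_tm A B) (TPair f a)) (TApp f a) B"
proof -
  have body: "typing (TyProd (TyArr A B) A # \<Gamma>) (TApp (TFst (TVar 0)) (TSnd (TVar 0))) B"
    by (rule typing.t_app, rule typing.t_fst[where B = A], simp,
        rule typing.t_snd[where A = "TyArr A B"], simp)
  have "beq \<Gamma> (TApp (ev_tm A B) (TPair f a)) (TApp (TFst (TPair f a)) (TSnd (TPair f a))) B"
    using beq_beta[OF body typing.t_pair[OF assms]] by (simp add: ev_tm_def)
  also have "beq \<Gamma> (TApp (TFst (TPair f a)) (TSnd (TPair f a))) (TApp f a) B"
    using assms by (intro beq_app beq_fst_pair beq_snd_pair)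
  finally show ?thesis .
qed

lemma beta_cur:
  assumes F: "typing [] F (TyArr (TyProd X A) B)" and x: "typing \<Gamma> x X" and a: "typing \<Gamma> a A"
  shows "beq \<Gamma> (TApp (TApp (cur_tm X A F) x) a) (TApp F (TPair x a)) B"
proof -
  have body: "typing (A # \<Gamma>) (TApp F (TPair (lift 0 x) (TVar 0))) B"
    using F x by (simp add: typing.t_pair typing_app_closed typing_lift0)
  have "beq \<Gamma> (TApp (cur_tm X A F) x) (TAbs A (TApp F (TPair (lift 0 x) (TVar 0)))) (TyArr A B)"
    using beq_beta[of X \<Gamma> "TAbs A (TApp F (TPair (TVar 1) (TVar 0)))" "TyArr A B" x] F x
    by (simp add: cur_tm_def lift_closed subst_closed typing.t_abs typing.t_pair typing_app_closed)
  then have "beq \<Gamma> (TApp (TApp (cur_tm X A F) x) a) (TApp (TAbs A (TApp F (TPair (lift 0 x) (TVar 0)))) a) B"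
    using a by (rule beq_appL)
  also have "beq \<Gamma> (TApp (TAbs A (TApp F (TPair (lift 0 x) (TVar 0)))) a) (TApp F (TPair x a)) B"
    using beq_beta[OF body a] F by (simp add: subst_lift subst_closed)
  finally show ?thesis .
qed

lemma beta_times_id:
  assumes H: "typing [] H (TyArr X Y)" and p: "typing \<Gamma> p (TyProd X A)"
  shows "beq \<Gamma> (TApp (times_id_tm X A H) p) (TPair (TApp H (TFst p)) (TSnd p)) (TyProd Y A)"
proof -
  let ?Hfst = "comp_tm (TyProd X A) (fst_tm X A) H"
  have "beq \<Gamma> (TApp (times_id_tm X A H) p) (TPair (TApp ?Hfst p) (TApp (snd_tm X A) p)) (TyProd Y A)"
    unfolding times_id_tm_def using H p by (intro beta_pair) auto
  also have "beq \<Gamma> (TPair (TApp ?Hfst p) (TApp (snd_tm X A) p)) (TPair (TApp H (TFst p)) (TSnd p)) (TyProd Y A)"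
  proof (rule beq_pair)
    have "beq \<Gamma> (TApp ?Hfst p) (TApp H (TApp (fst_tm X A) p)) Y"
      using H p by (intro beta_comp) auto
    also have "beq \<Gamma> (TApp H (TApp (fst_tm X A) p)) (TApp H (TFst p)) Y"
      by (rule beq_appR[OF typing_closed[OF H] beta_fst[OF p]])
    finally show "beq \<Gamma> (TApp ?Hfst p) (TApp H (TFst p)) Y" .
  qed (rule beta_snd[OF p])
  finally show ?thesis .
qed

lemma beta_ev_times_id:
  assumes H: "typing [] H (TyArr X (TyArr A B))" and p: "typing \<Gamma> p (TyProd X A)"
  shows "beq \<Gamma> (TApp (comp_tm (TyProd X A) (times_id_tm X A H) (ev_tm A B)) p) (TApp (TApp H (TFst p)) (TSnd p)) B"
proof -
  have "beq \<Gamma> (TApp (comp_tm (TyProd X A) (times_id_tm X A H) (ev_tm A B)) p)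
      (TApp (ev_tm A B) (TApp (times_id_tm X A H) p)) B"
    using H p by (intro beta_comp) auto
  also have "beq \<Gamma> (TApp (ev_tm A B) (TApp (times_id_tm X A H) p))
      (TApp (ev_tm A B) (TPair (TApp H (TFst p)) (TSnd p))) B"
    by (rule beq_appR[OF typing_closed[OF typing_ev_tm] beta_times_id[OF H p]])
  also have "beq \<Gamma> (TApp (ev_tm A B) (TPair (TApp H (TFst p)) (TSnd p))) (TApp (TApp H (TFst p)) (TSnd p)) B"
    using H p by (intro beta_ev typing_app_closed typing.t_fst typing.t_snd)
  finally show ?thesis .
qed

lemma comp_id_beq:
  assumes M: "typing [] M (TyArr A B)"
  shows "beq [] (comp_tm A M (id_tm B)) M (TyArr A B)"
proof (rule beq_ext)
  have "beq [A] (TApp (comp_tm A M (id_tm B)) (TVar 0)) (TApp (id_tm B) (TApp M (TVar 0))) B"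
    by (rule beta_comp[OF M typing_id_tm]) simp
  also have "beq [A] (TApp (id_tm B) (TApp M (TVar 0))) (TApp M (TVar 0)) B"
    using M by (simp add: beta_id typing_app_closed)
  finally show "beq [A] (TApp (comp_tm A M (id_tm B)) (TVar 0)) (TApp M (TVar 0)) B" .
qed (use M in auto)

lemma id_comp_beq:
  assumes M: "typing [] M (TyArr A B)"
  shows "beq [] (comp_tm A (id_tm A) M) M (TyArr A B)"
proof (rule beq_ext)
  have "beq [A] (TApp (comp_tm A (id_tm A) M) (TVar 0)) (TApp M (TApp (id_tm A) (TVar 0))) B"
    by (rule beta_comp[OF typing_id_tm M]) simp
  also have "beq [A] (TApp M (TApp (id_tm A) (TVar 0))) (TApp M (TVar 0)) B"
    by (rule beq_appR[OF typing_closed[OF M] beta_id]) simp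
  finally show "beq [A] (TApp (comp_tm A (id_tm A) M) (TVar 0)) (TApp M (TVar 0)) B" .
qed (use M in auto)

lemma comp_assoc_beq:
  assumes M: "typing [] M (TyArr A B)" and N: "typing [] N (TyArr B C)" and K: "typing [] K (TyArr C D)"
  shows "beq [] (comp_tm A (comp_tm A M N) K) (comp_tm A M (comp_tm B N K)) (TyArr A D)"
proof (rule beq_ext)
  let ?x = "TVar 0"
  have x: "typing [A] ?x A" and Mx: "typing [A] (TApp M ?x) B"
    using M by (simp_all add: typing_app_closed)
  have "beq [A] (TApp (comp_tm A (comp_tm A M N) K) ?x) (TApp K (TApp (comp_tm A M N) ?x)) D"
    using M N K x by (intro beta_comp) auto
  also have "beq [A] (TApp K (TApp (comp_tm A M N) ?x)) (TApp K (TApp N (TApp M ?x))) D"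
    by (rule beq_appR[OF typing_closed[OF K] beta_comp[OF M N x]])
  also have "beq [A] (TApp K (TApp N (TApp M ?x))) (TApp (comp_tm B N K) (TApp M ?x)) D"
    by (rule beq_sym[OF beta_comp[OF N K Mx]])
  also have "beq [A] (TApp (comp_tm B N K) (TApp M ?x)) (TApp (comp_tm A M (comp_tm B N K)) ?x) D"
    using M N K x by (intro beq_sym[OF beta_comp]) auto
  finally show "beq [A] (TApp (comp_tm A (comp_tm A M N) K) ?x) (TApp (comp_tm A M (comp_tm B N K)) ?x) D" .
qed (use M N K in auto)

lemma unit_unique_beq: "typing [] M (TyArr X TyOne) \<Longrightarrow> beq [] M (unit_tm X) (TyArr X TyOne)"
proof (rule beq_ext)
  assume M: "typing [] M (TyArr X TyOne)"
  have "beq [X] (TApp (unit_tm X) (TVar 0)) TUnit TyOne"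
    using beq_beta[of X "[X]" TUnit TyOne "TVar 0"] by (simp add: unit_tm_def typing.t_unit)
  moreover have "beq [X] (TApp M (TVar 0)) TUnit TyOne"
    using M by (simp add: beq_unit_eta typing_app_closed)
  ultimately show "beq [X] (TApp M (TVar 0)) (TApp (unit_tm X) (TVar 0)) TyOne"
    by (meson beq_sym beq_trans)
qed auto

lemma fst_pair_beq:
  assumes F: "typing [] F (TyArr X A)" and G: "typing [] G (TyArr X B)"
  shows "beq [] (comp_tm X (pair_tm X F G) (fst_tm A B)) F (TyArr X A)"
proof (rule beq_ext)
  let ?x = "TVar 0" and ?FG = "TPair (TApp F (TVar 0)) (TApp G (TVar 0))"
  have FG: "typing [X] ?FG (TyProd A B)"
    using F G by (simp add: typing.t_pair typing_app_closed)
  have "beq [X] (TApp (comp_tm X (pair_tm X F G) (fst_tm A B)) ?x) (TApp (fst_tm A B) (TApp (pair_tm X F G) ?x)) A"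
    using F G by (intro beta_comp) auto
  also have "beq [X] (TApp (fst_tm A B) (TApp (pair_tm X F G) ?x)) (TApp (fst_tm A B) ?FG) A"
    by (rule beq_appR[OF typing_closed[OF typing_fst_tm] beta_pair[OF F G]]) simp
  also have "beq [X] (TApp (fst_tm A B) ?FG) (TFst ?FG) A"
    by (rule beta_fst[OF FG])
  also have "beq [X] (TFst ?FG) (TApp F ?x) A"
    using F G by (intro beq_fst_pair typing_app_closed) simp_all
  finally show "beq [X] (TApp (comp_tm X (pair_tm X F G) (fst_tm A B)) ?x) (TApp F ?x) A" .
qed (use F G in auto)

lemma snd_pair_beq:
  assumes F: "typing [] F (TyArr X A)" and G: "typing [] G (TyArr X B)"
  shows "beq [] (comp_tm X (pair_tm X F G) (snd_tm A B)) G (TyArr X B)"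
proof (rule beq_ext)
  let ?x = "TVar 0" and ?FG = "TPair (TApp F (TVar 0)) (TApp G (TVar 0))"
  have FG: "typing [X] ?FG (TyProd A B)"
    using F G by (simp add: typing.t_pair typing_app_closed)
  have "beq [X] (TApp (comp_tm X (pair_tm X F G) (snd_tm A B)) ?x) (TApp (snd_tm A B) (TApp (pair_tm X F G) ?x)) B"
    using F G by (intro beta_comp) auto
  also have "beq [X] (TApp (snd_tm A B) (TApp (pair_tm X F G) ?x)) (TApp (snd_tm A B) ?FG) B"
    by (rule beq_appR[OF typing_closed[OF typing_snd_tm] beta_pair[OF F G]]) simp
  also have "beq [X] (TApp (snd_tm A B) ?FG) (TSnd ?FG) B"
    by (rule beta_snd[OF FG])
  also have "beq [X] (TSnd ?FG) (TApp G ?x) B"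
    using F G by (intro beq_snd_pair typing_app_closed) simp_all
  finally show "beq [X] (TApp (comp_tm X (pair_tm X F G) (snd_tm A B)) ?x) (TApp G ?x) B" .
qed (use F G in auto)

lemma pair_eta_beq:
  assumes H: "typing [] H (TyArr X (TyProd A B))"
  shows "beq [] (pair_tm X (comp_tm X H (fst_tm A B)) (comp_tm X H (snd_tm A B))) H (TyArr X (TyProd A B))"
proof (rule beq_ext)
  let ?x = "TVar 0"
  have x: "typing [X] ?x X" and Hx: "typing [X] (TApp H ?x) (TyProd A B)"
    using H by (simp_all add: typing_app_closed)
  have "beq [X] (TApp (pair_tm X (comp_tm X H (fst_tm A B)) (comp_tm X H (snd_tm A B))) ?x)
      (TPair (TApp (comp_tm X H (fst_tm A B)) ?x) (TApp (comp_tm X H (snd_tm A B)) ?x)) (TyProd A B)"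
    using H by (intro beta_pair) auto
  also have "beq [X] (TPair (TApp (comp_tm X H (fst_tm A B)) ?x) (TApp (comp_tm X H (snd_tm A B)) ?x))
      (TPair (TFst (TApp H ?x)) (TSnd (TApp H ?x))) (TyProd A B)"
    by (rule beq_pair[OF beq_trans[OF beta_comp[OF H typing_fst_tm x] beta_fst[OF Hx]]
                         beq_trans[OF beta_comp[OF H typing_snd_tm x] beta_snd[OF Hx]]])
  also have "beq [X] (TPair (TFst (TApp H ?x)) (TSnd (TApp H ?x))) (TApp H ?x) (TyProd A B)"
    by (rule beq_surj_pair[OF Hx])
  finally show "beq [X] (TApp (pair_tm X (comp_tm X H (fst_tm A B)) (comp_tm X H (snd_tm A B))) ?x)
      (TApp H ?x) (TyProd A B)" .
qed (use H in auto)

lemma fst_times_id_beq: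
  "typing [] H (TyArr X Y) \<Longrightarrow>
   beq [] (comp_tm (TyProd X A) (times_id_tm X A H) (fst_tm Y A)) (comp_tm (TyProd X A) (fst_tm X A) H)
     (TyArr (TyProd X A) Y)"
  unfolding times_id_tm_def by (rule fst_pair_beq) auto

lemma snd_times_id_beq:
  "typing [] H (TyArr X Y) \<Longrightarrow>
   beq [] (comp_tm (TyProd X A) (times_id_tm X A H) (snd_tm Y A)) (snd_tm X A) (TyArr (TyProd X A) A)"
  unfolding times_id_tm_def by (rule snd_pair_beq) auto

lemma ev_cur_beq:
  assumes F: "typing [] F (TyArr (TyProd X A) B)"
  shows "beq [] (comp_tm (TyProd X A) (times_id_tm X A (cur_tm X A F)) (ev_tm A B)) F (TyArr (TyProd X A) B)"
proof (rule beq_ext)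
  let ?p = "TVar 0"
  have p: "typing [TyProd X A] ?p (TyProd X A)" by simp
  have "beq [TyProd X A] (TApp (comp_tm (TyProd X A) (times_id_tm X A (cur_tm X A F)) (ev_tm A B)) ?p)
      (TApp (TApp (cur_tm X A F) (TFst ?p)) (TSnd ?p)) B"
    using F by (intro beta_ev_times_id) auto
  also have "beq [TyProd X A] (TApp (TApp (cur_tm X A F) (TFst ?p)) (TSnd ?p)) (TApp F (TPair (TFst ?p) (TSnd ?p))) B"
    by (rule beta_cur[OF F typing.t_fst[OF p] typing.t_snd[OF p]])
  also have "beq [TyProd X A] (TApp F (TPair (TFst ?p) (TSnd ?p))) (TApp F ?p) B"
    by (rule beq_appR[OF typing_closed[OF F] beq_surj_pair[OF p]])
  finally show "beq [TyProd X A] (TApp (comp_tm (TyProd X A) (times_id_tm X A (cur_tm X A F)) (ev_tm A B)) ?p)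
      (TApp F ?p) B" .
qed (use F in auto)

lemma cur_ev_beq:
  assumes H: "typing [] H (TyArr X (TyArr A B))"
  shows "beq [] (cur_tm X A (comp_tm (TyProd X A) (times_id_tm X A H) (ev_tm A B))) H (TyArr X (TyArr A B))"
proof (rule beq_ext2)
  let ?G = "comp_tm (TyProd X A) (times_id_tm X A H) (ev_tm A B)" and ?p = "TPair (TVar 1) (TVar 0)"
  have p: "typing [A, X] ?p (TyProd X A)" by (simp add: typing.t_pair)
  have "beq [A, X] (TApp (TApp (cur_tm X A ?G) (TVar 1)) (TVar 0)) (TApp ?G ?p) B"
    using H by (intro beta_cur) auto
  also have "beq [A, X] (TApp ?G ?p) (TApp (TApp H (TFst ?p)) (TSnd ?p)) B"
    by (rule beta_ev_times_id[OF H p])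
  also have "beq [A, X] (TApp (TApp H (TFst ?p)) (TSnd ?p)) (TApp (TApp H (TVar 1)) (TVar 0)) B"
    by (rule beq_app[OF beq_appR[OF typing_closed[OF H] beq_fst_pair] beq_snd_pair]) simp_all
  finally show "beq [A, X] (TApp (TApp (cur_tm X A ?G) (TVar 1)) (TVar 0)) (TApp (TApp H (TVar 1)) (TVar 0)) B" .
qed (use H in auto)

lemma comp_tm_beq_cong:
  assumes MM': "beq [] M M' (TyArr A B)" and NN': "beq [] N N' (TyArr B C)"
  shows "beq [] (comp_tm A M N) (comp_tm A M' N') (TyArr A C)"
proof -
  have "beq [A] (TApp N (TApp M (TVar 0))) (TApp N' (TApp M' (TVar 0))) C"
    by (rule beq_app[OF beq_closed[OF NN'] beq_appL[OF beq_closed[OF MM']]]) simp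
  moreover have "typing [] M (TyArr A B)" "typing [] M' (TyArr A B)"
    "typing [] N (TyArr B C)" "typing [] N' (TyArr B C)"
    using beq_typing[OF MM'] beq_typing[OF NN'] by simp_all
  ultimately show ?thesis by (simp add: comp_tm_def lift_closed beq_abs)
qed

lemma pair_tm_beq_cong:
  assumes FF': "beq [] F F' (TyArr X A)" and GG': "beq [] G G' (TyArr X B)"
  shows "beq [] (pair_tm X F G) (pair_tm X F' G') (TyArr X (TyProd A B))"
proof -
  have "beq [X] (TPair (TApp F (TVar 0)) (TApp G (TVar 0))) (TPair (TApp F' (TVar 0)) (TApp G' (TVar 0))) (TyProd A B)"
    by (rule beq_pair[OF beq_appL[OF beq_closed[OF FF']] beq_appL[OF beq_closed[OF GG']]]) simp_all
  moreover have "typing [] F (TyArr X A)" "typing [] F' (TyArr X A)"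
    "typing [] G (TyArr X B)" "typing [] G' (TyArr X B)"
    using beq_typing[OF FF'] beq_typing[OF GG'] by simp_all
  ultimately show ?thesis by (simp add: pair_tm_def lift_closed beq_abs)
qed

lemma cur_tm_beq_cong:
  assumes FF': "beq [] F F' (TyArr (TyProd X A) B)"
  shows "beq [] (cur_tm X A F) (cur_tm X A F') (TyArr X (TyArr A B))"
proof -
  have "beq [A, X] (TApp F (TPair (TVar 1) (TVar 0))) (TApp F' (TPair (TVar 1) (TVar 0))) B"
    by (rule beq_appL[OF beq_closed[OF FF']]) (simp add: typing.t_pair)
  moreover have "typing [] F (TyArr (TyProd X A) B)" "typing [] F' (TyArr (TyProd X A) B)"
    using beq_typing[OF FF'] by simp_all
  ultimately show ?thesis by (simp add: cur_tm_def lift_closed beq_abs)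
qed

section \<open>Quotients of the term model\<close>

definition term_class :: "(ty \<Rightarrow> tm \<Rightarrow> tm \<Rightarrow> bool) \<Rightarrow> ty \<Rightarrow> tm \<Rightarrow> tm set" where
  "term_class R T M = {N. R T M N}"

definition term_cat :: "(ty \<Rightarrow> tm \<Rightarrow> tm \<Rightarrow> bool) \<Rightarrow> (ty, tm set) cat" where
  "term_cat R = \<lparr> Obj = UNIV,
     Hom = (\<lambda>A B. {c. \<exists>M. typing [] M (TyArr A B) \<and> c = term_class R (TyArr A B) M}),
     Idm = (\<lambda>A. term_class R (TyArr A A) (id_tm A)),
     Cmp = (\<lambda>A B C g f. {K. \<exists>N\<in>g. \<exists>M\<in>f. R (TyArr A C) (comp_tm A M N) K}) \<rparr>"

definition coarsen :: "(ty \<Rightarrow> tm \<Rightarrow> tm \<Rightarrow> bool) \<Rightarrow> ty \<Rightarrow> ty \<Rightarrow> tm set \<Rightarrow> tm set" where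
  "coarsen R A B c = {N. \<exists>M\<in>c. R (TyArr A B) M N}"

locale ccc_congruence =
  fixes R :: "ty \<Rightarrow> tm \<Rightarrow> tm \<Rightarrow> bool"
  assumes beq_into: "beq [] M N T \<Longrightarrow> R T M N"
    and sym: "R T M N \<Longrightarrow> R T N M"
    and trans [trans]: "R T M N \<Longrightarrow> R T N K \<Longrightarrow> R T M K"
    and comp_cong: "R (TyArr A B) M M' \<Longrightarrow> R (TyArr B C) N N' \<Longrightarrow>
      R (TyArr A C) (comp_tm A M N) (comp_tm A M' N')"
    and pair_cong: "R (TyArr X A) F F' \<Longrightarrow> R (TyArr X B) G G' \<Longrightarrow>
      R (TyArr X (TyProd A B)) (pair_tm X F G) (pair_tm X F' G')"
    and cur_cong: "R (TyArr (TyProd X A) B) F F' \<Longrightarrow>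
      R (TyArr X (TyArr A B)) (cur_tm X A F) (cur_tm X A F')"
begin

abbreviation cls :: "ty \<Rightarrow> tm \<Rightarrow> tm set" where
  "cls \<equiv> term_class R"

lemma refl: "typing [] M T \<Longrightarrow> R T M M"
  by (rule beq_into) (rule beq_refl)

lemma cls_eq_iff:
  assumes "typing [] M' T"
  shows "cls T M = cls T M' \<longleftrightarrow> R T M M'"
proof
  assume eq: "cls T M = cls T M'"
  have "M' \<in> cls T M'" using refl[OF assms] by (simp add: term_class_def)
  then have "M' \<in> cls T M" by (simp add: eq)
  then show "R T M M'" by (simp add: term_class_def)
next
  assume "R T M M'"
  then have "R T M N \<longleftrightarrow> R T M' N" for N using sym trans by blast
  then show "cls T M = cls T M'" by (simp add: term_class_def)
qed

lemma Obj_term_cat [simp]: "Obj (term_cat R) = UNIV"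
  by (simp add: term_cat_def)

lemma cls_in_Hom: "typing [] M (TyArr A B) \<Longrightarrow> cls (TyArr A B) M \<in> Hom (term_cat R) A B"
  by (auto simp: term_cat_def)

lemma Hom_term_catE:
  assumes "f \<in> Hom (term_cat R) A B"
  obtains M where "typing [] M (TyArr A B)" "f = cls (TyArr A B) M"
  using assms by (auto simp: term_cat_def)

lemma Idm_term_cat: "Idm (term_cat R) A = cls (TyArr A A) (id_tm A)"
  by (simp add: term_cat_def)

lemma Cmp_cls:
  assumes M: "typing [] M (TyArr A B)" and N: "typing [] N (TyArr B C)"
  shows "Cmp (term_cat R) A B C (cls (TyArr B C) N) (cls (TyArr A B) M) = cls (TyArr A C) (comp_tm A M N)"
proof -
  have "R (TyArr A C) (comp_tm A M N) K \<longleftrightarrow> (\<exists>N'. R (TyArr B C) N N' \<and> (\<exists>M'. R (TyArr A B) M M' \<and>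
      R (TyArr A C) (comp_tm A M' N') K))" for K
    using refl[OF M] refl[OF N] comp_cong trans by blast
  then show ?thesis by (simp add: term_cat_def term_class_def)
qed

lemma Cmp_cls_eq_iff:
  assumes "typing [] M (TyArr A B)" and "typing [] N (TyArr B C)" and "typing [] K (TyArr A C)"
  shows "Cmp (term_cat R) A B C (cls (TyArr B C) N) (cls (TyArr A B) M) = cls (TyArr A C) K \<longleftrightarrow>
    R (TyArr A C) (comp_tm A M N) K"
  using assms by (simp add: Cmp_cls cls_eq_iff)

lemma category: "is_category (term_cat R)"
  unfolding is_category_def
proof (intro conjI ballI)
  fix A show "Idm (term_cat R) A \<in> Hom (term_cat R) A A"
    by (simp add: Idm_term_cat cls_in_Hom typing_id_tm)
next
  fix A B D f g assume "f \<in> Hom (term_cat R) A B" "g \<in> Hom (term_cat R) B D"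
  then show "Cmp (term_cat R) A B D g f \<in> Hom (term_cat R) A D"
    by (elim Hom_term_catE) (simp add: Cmp_cls cls_in_Hom typing_comp_tm)
next
  fix A B f assume "f \<in> Hom (term_cat R) A B"
  then obtain M where M: "typing [] M (TyArr A B)" and f: "f = cls (TyArr A B) M"
    by (rule Hom_term_catE)
  show "Cmp (term_cat R) A B B (Idm (term_cat R) B) f = f"
    "Cmp (term_cat R) A A B f (Idm (term_cat R) A) = f"
    using M beq_into[OF comp_id_beq[OF M]] beq_into[OF id_comp_beq[OF M]]
    by (simp_all add: f Idm_term_cat Cmp_cls_eq_iff typing_id_tm)
next
  fix A B D E f g h
  assume "f \<in> Hom (term_cat R) A B" "g \<in> Hom (term_cat R) B D" "h \<in> Hom (term_cat R) D E"
  then obtain M N K where M: "typing [] M (TyArr A B)" "f = cls (TyArr A B) M"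
    and N: "typing [] N (TyArr B D)" "g = cls (TyArr B D) N"
    and K: "typing [] K (TyArr D E)" "h = cls (TyArr D E) K"
    by (metis Hom_term_catE)
  have "R (TyArr A E) (comp_tm A (comp_tm A M N) K) (comp_tm A M (comp_tm B N K))"
    by (rule beq_into[OF comp_assoc_beq[OF M(1) N(1) K(1)]])
  then show "Cmp (term_cat R) A D E h (Cmp (term_cat R) A B D g f) =
      Cmp (term_cat R) A B E (Cmp (term_cat R) B D E h g) f"
    using M N K by (simp add: Cmp_cls cls_eq_iff typing_comp_tm)
qed

lemma terminal: "is_terminal (term_cat R) TyOne"
  unfolding is_terminal_def
proof (intro conjI ballI)
  fix X
  show "\<exists>!h. h \<in> Hom (term_cat R) X TyOne"
  proof (rule ex1I)
    show "cls (TyArr X TyOne) (unit_tm X) \<in> Hom (term_cat R) X TyOne"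
      by (rule cls_in_Hom[OF typing_unit_tm])
    fix h assume "h \<in> Hom (term_cat R) X TyOne"
    then show "h = cls (TyArr X TyOne) (unit_tm X)"
      by (elim Hom_term_catE) (simp add: cls_eq_iff typing_unit_tm beq_into unit_unique_beq)
  qed
qed simp

abbreviation fst_cls :: "ty \<Rightarrow> ty \<Rightarrow> tm set" where
  "fst_cls A B \<equiv> cls (TyArr (TyProd A B) A) (fst_tm A B)"

abbreviation snd_cls :: "ty \<Rightarrow> ty \<Rightarrow> tm set" where
  "snd_cls A B \<equiv> cls (TyArr (TyProd A B) B) (snd_tm A B)"

abbreviation ev_cls :: "ty \<Rightarrow> ty \<Rightarrow> tm set" where
  "ev_cls A B \<equiv> cls (TyArr (TyProd (TyArr A B) A) B) (ev_tm A B)"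

lemma product: "is_product (term_cat R) A B (TyProd A B) (fst_cls A B) (snd_cls A B)"
  unfolding is_product_def
proof (intro conjI ballI)
  show "fst_cls A B \<in> Hom (term_cat R) (TyProd A B) A" "snd_cls A B \<in> Hom (term_cat R) (TyProd A B) B"
    by (simp_all add: cls_in_Hom typing_fst_tm typing_snd_tm)
  fix X f g assume "f \<in> Hom (term_cat R) X A" "g \<in> Hom (term_cat R) X B"
  then obtain F G where F: "typing [] F (TyArr X A)" "f = cls (TyArr X A) F"
    and G: "typing [] G (TyArr X B)" "g = cls (TyArr X B) G"
    by (metis Hom_term_catE)
  have FG: "typing [] (pair_tm X F G) (TyArr X (TyProd A B))" using F G by blast
  show "\<exists>!h. h \<in> Hom (term_cat R) X (TyProd A B) \<and>
      Cmp (term_cat R) X (TyProd A B) A (fst_cls A B) h = f \<and> Cmp (term_cat R) X (TyProd A B) B (snd_cls A B) h = g"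
  proof (rule ex1I, intro conjI)
    show "cls (TyArr X (TyProd A B)) (pair_tm X F G) \<in> Hom (term_cat R) X (TyProd A B)"
      by (rule cls_in_Hom[OF FG])
    show "Cmp (term_cat R) X (TyProd A B) A (fst_cls A B) (cls (TyArr X (TyProd A B)) (pair_tm X F G)) = f"
      "Cmp (term_cat R) X (TyProd A B) B (snd_cls A B) (cls (TyArr X (TyProd A B)) (pair_tm X F G)) = g"
      using F G FG beq_into[OF fst_pair_beq[OF F(1) G(1)]] beq_into[OF snd_pair_beq[OF F(1) G(1)]]
      by (simp_all add: Cmp_cls_eq_iff typing_fst_tm typing_snd_tm)
    fix h assume "h \<in> Hom (term_cat R) X (TyProd A B) \<and>
      Cmp (term_cat R) X (TyProd A B) A (fst_cls A B) h = f \<and> Cmp (term_cat R) X (TyProd A B) B (snd_cls A B) h = g"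
    then obtain H where H: "typing [] H (TyArr X (TyProd A B))" "h = cls (TyArr X (TyProd A B)) H"
      and HF: "R (TyArr X A) (comp_tm X H (fst_tm A B)) F" and HG: "R (TyArr X B) (comp_tm X H (snd_tm A B)) G"
      using F G by (auto elim!: Hom_term_catE simp: Cmp_cls_eq_iff typing_fst_tm typing_snd_tm)
    have "R (TyArr X (TyProd A B)) H (pair_tm X (comp_tm X H (fst_tm A B)) (comp_tm X H (snd_tm A B)))"
      by (rule sym[OF beq_into[OF pair_eta_beq[OF H(1)]]])
    also have "R (TyArr X (TyProd A B)) \<dots> (pair_tm X F G)"
      by (rule pair_cong[OF HF HG])
    finally show "h = cls (TyArr X (TyProd A B)) (pair_tm X F G)"
      using H FG by (simp add: cls_eq_iff)
  qed
qed simp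

lemma transposes_cls_iff:
  assumes F: "typing [] F (TyArr (TyProd X A) B)" and H: "typing [] H (TyArr X (TyArr A B))"
    and K: "typing [] K (TyArr (TyProd X A) (TyProd (TyArr A B) A))"
  shows "transposes (term_cat R) A B (TyArr A B) (TyProd (TyArr A B) A)
      (fst_cls (TyArr A B) A) (snd_cls (TyArr A B) A) (ev_cls A B) X (TyProd X A) (fst_cls X A) (snd_cls X A)
      (cls (TyArr (TyProd X A) B) F) (cls (TyArr X (TyArr A B)) H) (cls (TyArr (TyProd X A) (TyProd (TyArr A B) A)) K)
    \<longleftrightarrow> R (TyArr (TyProd X A) (TyArr A B)) (comp_tm (TyProd X A) K (fst_tm (TyArr A B) A))
          (comp_tm (TyProd X A) (fst_tm X A) H)
      \<and> R (TyArr (TyProd X A) A) (comp_tm (TyProd X A) K (snd_tm (TyArr A B) A)) (snd_tm X A)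
      \<and> R (TyArr (TyProd X A) B) (comp_tm (TyProd X A) K (ev_tm A B)) F"
  using F H K cls_in_Hom[OF H] cls_in_Hom[OF K] typing_comp_tm[OF typing_fst_tm H]
  by (simp add: transposes_def Cmp_cls cls_eq_iff typing_fst_tm typing_snd_tm typing_ev_tm typing_comp_tm)

lemma exponential:
  "is_exponential (term_cat R) A B (TyArr A B) (TyProd (TyArr A B) A)
     (fst_cls (TyArr A B) A) (snd_cls (TyArr A B) A) (ev_cls A B)"
proof (rule is_exponentialI[where Pr = "\<lambda>X. TyProd X A" and \<pi>\<^sub>1 = "\<lambda>X. fst_cls X A"
      and \<pi>\<^sub>2 = "\<lambda>X. snd_cls X A", OF category _ _ _ product _ product])
  show "ev_cls A B \<in> Hom (term_cat R) (TyProd (TyArr A B) A) B"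
    by (rule cls_in_Hom[OF typing_ev_tm])
  fix X f assume "f \<in> Hom (term_cat R) (TyProd X A) B"
  then obtain F where F: "typing [] F (TyArr (TyProd X A) B)" and f: "f = cls (TyArr (TyProd X A) B) F"
    by (rule Hom_term_catE)
  let ?transposes = "transposes (term_cat R) A B (TyArr A B) (TyProd (TyArr A B) A)
    (fst_cls (TyArr A B) A) (snd_cls (TyArr A B) A) (ev_cls A B) X (TyProd X A) (fst_cls X A) (snd_cls X A) f"
  show "\<exists>!h. \<exists>k. ?transposes h k"
  proof (rule ex1I)
    have curF: "typing [] (cur_tm X A F) (TyArr X (TyArr A B))" using F by blast
    show "\<exists>k. ?transposes (cls (TyArr X (TyArr A B)) (cur_tm X A F)) k"
      using transposes_cls_iff[OF F curF typing_times_id_tm[OF curF]] beq_into[OF fst_times_id_beq[OF curF]]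
        beq_into[OF snd_times_id_beq[OF curF]] beq_into[OF ev_cur_beq[OF F]]
      unfolding f by blast
    fix h assume "\<exists>k. ?transposes h k"
    then obtain k where hk: "?transposes h k" ..
    then obtain H K where H: "typing [] H (TyArr X (TyArr A B))" "h = cls (TyArr X (TyArr A B)) H"
      and K: "typing [] K (TyArr (TyProd X A) (TyProd (TyArr A B) A))"
        "k = cls (TyArr (TyProd X A) (TyProd (TyArr A B) A)) K"
      unfolding transposes_def by (metis Hom_term_catE)
    from hk have KH: "R (TyArr (TyProd X A) (TyArr A B)) (comp_tm (TyProd X A) K (fst_tm (TyArr A B) A))
        (comp_tm (TyProd X A) (fst_tm X A) H)"
      and KA: "R (TyArr (TyProd X A) A) (comp_tm (TyProd X A) K (snd_tm (TyArr A B) A)) (snd_tm X A)"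
      and KF: "R (TyArr (TyProd X A) B) (comp_tm (TyProd X A) K (ev_tm A B)) F"
      unfolding f H(2) K(2) transposes_cls_iff[OF F H(1) K(1)] by simp_all
    have "R (TyArr (TyProd X A) (TyProd (TyArr A B) A)) K (pair_tm (TyProd X A)
        (comp_tm (TyProd X A) K (fst_tm (TyArr A B) A)) (comp_tm (TyProd X A) K (snd_tm (TyArr A B) A)))"
      by (rule sym[OF beq_into[OF pair_eta_beq[OF K(1)]]])
    also have "R (TyArr (TyProd X A) (TyProd (TyArr A B) A)) \<dots> (times_id_tm X A H)"
      unfolding times_id_tm_def by (rule pair_cong[OF KH KA])
    finally have "R (TyArr (TyProd X A) B) F (comp_tm (TyProd X A) (times_id_tm X A H) (ev_tm A B))"
      using trans[OF sym[OF KF] comp_cong[OF _ refl[OF typing_ev_tm]]] by blast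
    then have "R (TyArr X (TyArr A B)) (cur_tm X A F) H"
      using trans[OF cur_cong beq_into[OF cur_ev_beq[OF H(1)]]] by blast
    then show "h = cls (TyArr X (TyArr A B)) (cur_tm X A F)"
      using H F by (simp add: cls_eq_iff sym typing_cur_tm)
  qed
qed simp_all

lemma cartesian_closed: "cartesian_closed (term_cat R)"
  unfolding cartesian_closed_def using category terminal product exponential by blast

end

text \<open>For \<open>R \<subseteq> R'\<close>, \<^const>\<open>coarsen\<close> \<open>R'\<close> is the quotient functor from \<open>Lam/R\<close> to \<open>Lam/R'\<close>;
  both \<open>\<pi>\<^sub>Q\<close> and \<open>Lam\<^sub>f\<close> are of this form.\<close>
locale coarsening = src: ccc_congruence R + tgt: ccc_congruence R' for R R' +
  assumes refines: "R T M N \<Longrightarrow> R' T M N"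
begin

lemma coarsen_cls:
  assumes "typing [] M (TyArr A B)"
  shows "coarsen R' A B (term_class R (TyArr A B) M) = term_class R' (TyArr A B) M"
  unfolding coarsen_def term_class_def using assms src.refl refines tgt.trans by blast

lemma coarsen_is_functor: "is_functor (term_cat R) (term_cat R') id (coarsen R')"
  unfolding is_functor_def
proof (intro conjI ballI src.category tgt.category)
  fix A B f assume "f \<in> Hom (term_cat R) A B"
  then show "coarsen R' A B f \<in> Hom (term_cat R') (id A) (id B)"
    by (auto elim!: src.Hom_term_catE simp: coarsen_cls tgt.cls_in_Hom)
next
  fix A show "coarsen R' A A (Idm (term_cat R) A) = Idm (term_cat R') (id A)"
    by (simp add: src.Idm_term_cat tgt.Idm_term_cat coarsen_cls typing_id_tm)
next
  fix A B C f g assume "f \<in> Hom (term_cat R) A B" "g \<in> Hom (term_cat R) B C"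
  then show "coarsen R' A C (Cmp (term_cat R) A B C g f) =
      Cmp (term_cat R') (id A) (id B) (id C) (coarsen R' B C g) (coarsen R' A B f)"
    by (auto elim!: src.Hom_term_catE simp: coarsen_cls src.Cmp_cls tgt.Cmp_cls typing_comp_tm)
qed simp

lemma coarsen_cc_functor: "cc_functor (term_cat R) (term_cat R') id (coarsen R')"
proof (rule cc_functorI[OF coarsen_is_functor src.terminal])
  show "is_terminal (term_cat R') (id TyOne)" using tgt.terminal by simp
  fix A B
  show "\<exists>P p1 p2. is_product (term_cat R) A B P p1 p2 \<and>
      is_product (term_cat R') (id A) (id B) (id P) (coarsen R' P A p1) (coarsen R' P B p2)"
    using src.product tgt.product by (fastforce simp: coarsen_cls typing_fst_tm typing_snd_tm)
  show "\<exists>E P p1 p2 ev. is_exponential (term_cat R) A B E P p1 p2 ev \<and>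
      is_exponential (term_cat R') (id A) (id B) (id E) (id P) (coarsen R' P E p1) (coarsen R' P A p2) (coarsen R' P B ev)"
    using src.exponential tgt.exponential by (fastforce simp: coarsen_cls typing_fst_tm typing_snd_tm typing_ev_tm)
qed

end

lemma coarsening_trans:
  assumes "coarsening R\<^sub>0 R" and "coarsening R R'"
  shows "coarsening R\<^sub>0 R'"
  using assms unfolding coarsening_def coarsening_axioms_def by blast

lemma coarsen_coarsen:
  assumes "coarsening R\<^sub>0 R" and "coarsening R R'" and c: "c \<in> Hom (term_cat R\<^sub>0) A B"
  shows "coarsen R' A B (coarsen R A B c) = coarsen R' A B c"
proof -
  interpret R\<^sub>0R: coarsening R\<^sub>0 R by fact
  interpret RR': coarsening R R' by fact
  interpret R\<^sub>0R': coarsening R\<^sub>0 R' using coarsening_trans assms(1,2) .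
  from c show ?thesis
    by (auto elim!: R\<^sub>0R.src.Hom_term_catE simp: R\<^sub>0R.coarsen_cls RR'.coarsen_cls R\<^sub>0R'.coarsen_cls)
qed

lemma ccc_congruence_beq: "ccc_congruence (\<lambda>T M N. beq [] M N T)"
  by unfold_locales
    (auto intro: beq_sym beq_trans comp_tm_beq_cong pair_tm_beq_cong cur_tm_beq_cong)

lemma coarsening_beq: "ccc_congruence R \<Longrightarrow> coarsening (\<lambda>T M N. beq [] M N T) R"
  unfolding coarsening_def coarsening_axioms_def
  using ccc_congruence_beq ccc_congruence.beq_into by blast

lemma Lam_eq_term_cat: "Lam = term_cat (\<lambda>T M N. beq [] M N T)"
  by (simp add: Lam_def term_cat_def term_class_def)

lemma LamQ_eq_term_cat: "LamQ Q = term_cat (simQ Q)"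
  by (simp add: LamQ_def term_cat_def term_class_def)

lemma piQ_eq_coarsen: "piQ Q = coarsen (simQ Q)"
  by (simp add: piQ_def coarsen_def fun_eq_iff)

section \<open>The finite-set model\<close>

lemma finite_sdom: "finite Q \<Longrightarrow> finite (sdom Q T)"
proof (induction T)
  case (TyProd A B)
  have "sdom Q (TyProd A B) = (\<lambda>(a, b). VP a b) ` (sdom Q A \<times> sdom Q B)" by auto
  then show ?case using TyProd by simp
next
  case (TyArr A B)
  have "sdom Q (TyArr A B) \<subseteq> VF ` Abs_fset ` Pow (sdom Q A \<times> sdom Q B)"
  proof
    fix v assume "v \<in> sdom Q (TyArr A B)"
    then obtain g h where v: "v = VF g" "\<forall>a\<in>sdom Q A. h a \<in> sdom Q B"
      "fset g = (\<lambda>a. (a, h a)) ` sdom Q A" by auto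
    then have "fset g \<in> Pow (sdom Q A \<times> sdom Q B)" by auto
    then show "v \<in> VF ` Abs_fset ` Pow (sdom Q A \<times> sdom Q B)"
      using v(1) fset_inverse[of g] by blast
  qed
  moreover have "finite (Pow (sdom Q A \<times> sdom Q B))" using TyArr by simp
  ultimately show ?case by (meson finite_imageI finite_subset)
qed auto

lemma vapp_graph: "fset g = (\<lambda>a. (a, h a)) ` S \<Longrightarrow> a \<in> S \<Longrightarrow> vapp (VF g) a = h a"
  unfolding vapp_def by (auto intro!: the_equality)

lemma vapp_VF_graph:
  "finite Q \<Longrightarrow> a \<in> sdom Q A \<Longrightarrow> vapp (VF (Abs_fset ((\<lambda>v. (v, h v)) ` sdom Q A))) a = h a"
  by (rule vapp_graph) (simp_all add: Abs_fset_inverse finite_sdom)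

lemma VF_graph_in_sdom:
  assumes "finite Q" and "\<And>a. a \<in> sdom Q A \<Longrightarrow> h a \<in> sdom Q B"
  shows "VF (Abs_fset ((\<lambda>a. (a, h a)) ` sdom Q A)) \<in> sdom Q (TyArr A B)"
  using assms by (auto simp: Abs_fset_inverse finite_sdom)

lemma vapp_in_sdom: "f \<in> sdom Q (TyArr A B) \<Longrightarrow> a \<in> sdom Q A \<Longrightarrow> vapp f a \<in> sdom Q B"
  by (auto simp: vapp_graph)

lemma sdom_arr_ext:
  assumes f: "f \<in> sdom Q (TyArr A B)" and g: "g \<in> sdom Q (TyArr A B)"
    and eq: "\<And>a. a \<in> sdom Q A \<Longrightarrow> vapp f a = vapp g a"
  shows "f = g"
proof -
  obtain F hf where F: "f = VF F" "fset F = (\<lambda>a. (a, hf a)) ` sdom Q A" using f by auto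
  obtain G hg where G: "g = VF G" "fset G = (\<lambda>a. (a, hg a)) ` sdom Q A" using g by auto
  have "hf a = hg a" if "a \<in> sdom Q A" for a
    using eq[OF that] vapp_graph[OF F(2) that] vapp_graph[OF G(2) that] F(1) G(1) by simp
  then have "fset F = fset G" unfolding F(2) G(2) by (intro image_cong) auto
  then show "f = g" using F(1) G(1) by (simp add: fset_inject)
qed

lemma eval_lift: "length \<rho>\<^sub>1 = k \<Longrightarrow> eval (lift k M) Q (\<rho>\<^sub>1 @ v # \<rho>\<^sub>2) = eval M Q (\<rho>\<^sub>1 @ \<rho>\<^sub>2)"
proof (induction M arbitrary: k \<rho>\<^sub>1)
  case (TAbs A M)
  have "eval (lift (Suc k) M) Q ((w # \<rho>\<^sub>1) @ v # \<rho>\<^sub>2) = eval M Q ((w # \<rho>\<^sub>1) @ \<rho>\<^sub>2)" for w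
    by (rule TAbs.IH) (simp add: TAbs.prems)
  then show ?case by simp
qed (auto simp: nth_append)

lemma eval_lift0: "eval (lift 0 M) Q (v # \<rho>) = eval M Q \<rho>"
  using eval_lift[of "[]" 0 M Q v \<rho>] by simp

lemma eval_subst:
  "length \<rho>\<^sub>1 = k \<Longrightarrow> eval (subst M k N) Q (\<rho>\<^sub>1 @ \<rho>\<^sub>2) = eval M Q (\<rho>\<^sub>1 @ eval N Q (\<rho>\<^sub>1 @ \<rho>\<^sub>2) # \<rho>\<^sub>2)"
proof (induction M arbitrary: k \<rho>\<^sub>1 N)
  case (TVar i)
  consider "i < k" | "i = k" | "i > k" by linarith
  then show ?case
  proof cases
    case 3
    then obtain j where "i = Suc j" by (cases i) auto
    then show ?thesis using 3 TVar by (auto simp: nth_append Suc_diff_le)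
  qed (use TVar in \<open>auto simp: nth_append\<close>)
next
  case (TAbs A M)
  have "eval (subst M (Suc k) (lift 0 N)) Q ((w # \<rho>\<^sub>1) @ \<rho>\<^sub>2)
      = eval M Q ((w # \<rho>\<^sub>1) @ eval N Q (\<rho>\<^sub>1 @ \<rho>\<^sub>2) # \<rho>\<^sub>2)" for w
    using TAbs.IH[of "w # \<rho>\<^sub>1" "Suc k" "lift 0 N"] TAbs.prems by (simp add: eval_lift0)
  then show ?case by simp
qed auto

lemma eval_subst0: "eval (subst M 0 N) Q \<rho> = eval M Q (eval N Q \<rho> # \<rho>)"
  using eval_subst[of "[]" 0 M N Q \<rho>] by simp

lemma eval_in_sdom:
  assumes fin: "finite Q"
  shows "typing \<Gamma> M T \<Longrightarrow> list_all2 (\<lambda>v A. v \<in> sdom Q A) \<rho> \<Gamma> \<Longrightarrow> eval M Q \<rho> \<in> sdom Q T"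
proof (induction arbitrary: \<rho> rule: typing.induct)
  case (t_var i \<Gamma>)
  then show ?case using list_all2_nthD2[OF t_var(2,1)] by simp
next
  case (t_abs A \<Gamma> M B)
  then have "eval M Q (v # \<rho>) \<in> sdom Q B" if "v \<in> sdom Q A" for v
    using that by simp
  then show ?case unfolding eval.simps by (rule VF_graph_in_sdom[OF fin])
next
  case (t_app \<Gamma> M A B N)
  show ?case using vapp_in_sdom[OF t_app.IH(1)[OF t_app.prems] t_app.IH(2)[OF t_app.prems]] by simp
next
  case (t_fst \<Gamma> M A B)
  then obtain a b where "eval M Q \<rho> = VP a b" "a \<in> sdom Q A" by fastforce
  then show ?case by (simp add: vfst_def)
next
  case (t_snd \<Gamma> M A B)
  then obtain a b where "eval M Q \<rho> = VP a b" "b \<in> sdom Q B" by fastforce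
  then show ?case by (simp add: vsnd_def)
qed simp_all

lemma beq_sound:
  assumes fin: "finite Q"
  shows "beq \<Gamma> M N T \<Longrightarrow> list_all2 (\<lambda>v A. v \<in> sdom Q A) \<rho> \<Gamma> \<Longrightarrow> eval M Q \<rho> = eval N Q \<rho>"
proof (induction arbitrary: \<rho> rule: beq.induct)
  case (beq_abs A \<Gamma> M M' B)
  then have "eval M Q (v # \<rho>) = eval M' Q (v # \<rho>)" if "v \<in> sdom Q A" for v
    using that by simp
  then have "(\<lambda>v. (v, eval M Q (v # \<rho>))) ` sdom Q A = (\<lambda>v. (v, eval M' Q (v # \<rho>))) ` sdom Q A"
    by (intro image_cong) auto
  then show ?case by simp
next
  case (beq_beta A \<Gamma> M B N)
  then have "eval N Q \<rho> \<in> sdom Q A" using eval_in_sdom[OF fin] by blast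
  then show ?case by (simp add: vapp_VF_graph[OF fin] eval_subst0)
next
  case (beq_eta \<Gamma> M A B)
  have "typing \<Gamma> (TAbs A (TApp (lift 0 M) (TVar 0))) (TyArr A B)"
    using beq_typing[OF beq.beq_eta[OF beq_eta(1)]] by simp
  with beq_eta show ?case
  proof (intro sdom_arr_ext[OF eval_in_sdom[OF fin] eval_in_sdom[OF fin]])
    fix a assume "a \<in> sdom Q A"
    from vapp_VF_graph[OF fin this, of "\<lambda>v. eval (TApp (lift 0 M) (TVar 0)) Q (v # \<rho>)"]
    show "vapp (eval (TAbs A (TApp (lift 0 M) (TVar 0))) Q \<rho>) a = vapp (eval M Q \<rho>) a"
      by (simp add: eval_lift0)
  qed
next
  case (beq_surj_pair \<Gamma> M A B)
  then obtain a b where "eval M Q \<rho> = VP a b" using eval_in_sdom[OF fin] by fastforce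
  then show ?case by (simp add: vfst_def vsnd_def)
next
  case (beq_unit_eta \<Gamma> M)
  then show ?case using eval_in_sdom[OF fin] by fastforce
qed (simp_all add: vfst_def vsnd_def)

lemma simQI: "typing [] M T \<Longrightarrow> typing [] N T \<Longrightarrow> sem Q M = sem Q N \<Longrightarrow> simQ Q T M N"
  by (simp add: simQ_def)

lemma ccc_congruence_simQ:
  assumes fin: "finite Q"
  shows "ccc_congruence (simQ Q)"
proof
  show "beq [] M N T \<Longrightarrow> simQ Q T M N" for M N T
    using beq_typing beq_sound[OF fin, of "[]" M N T "[]"] by (simp add: simQ_def sem_def)
  show "simQ Q (TyArr A C) (comp_tm A M N) (comp_tm A M' N')"
    if "simQ Q (TyArr A B) M M'" "simQ Q (TyArr B C) N N'" for A B C M M' N N'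
    using that by (intro simQI typing_comp_tm) (auto simp: simQ_def sem_def comp_tm_def eval_lift0)
  show "simQ Q (TyArr X (TyProd A B)) (pair_tm X F G) (pair_tm X F' G')"
    if "simQ Q (TyArr X A) F F'" "simQ Q (TyArr X B) G G'" for X A B F F' G G'
    using that by (intro simQI typing_pair_tm) (auto simp: simQ_def sem_def pair_tm_def eval_lift0)
  show "simQ Q (TyArr X (TyArr A B)) (cur_tm X A F) (cur_tm X A F')"
    if "simQ Q (TyArr (TyProd X A) B) F F'" for X A B F F'
    using that by (intro simQI typing_cur_tm) (auto simp: simQ_def sem_def cur_tm_def eval_lift0)
qed (auto simp: simQ_def)

section \<open>Logical relations induced by partial surjections\<close>

text \<open>At arrow types the relation is restricted to the semantic function spaces: otherwise it would
  also relate values \<^term>\<open>VF g\<close> whose graph \<open>g\<close> is not a function on the domain, and would not be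
  single-valued.\<close>
primrec logical_rel :: "('a \<times> 'b) set \<Rightarrow> 'a set \<Rightarrow> 'b set \<Rightarrow> ty \<Rightarrow> ('a val \<times> 'b val) set" where
  "logical_rel f Q Q' TyO = {(VB q, VB q') | q q'. (q, q') \<in> f}"
| "logical_rel f Q Q' TyOne = {(VU, VU)}"
| "logical_rel f Q Q' (TyProd A B) =
     {(VP a b, VP a' b') | a b a' b'. (a, a') \<in> logical_rel f Q Q' A \<and> (b, b') \<in> logical_rel f Q Q' B}"
| "logical_rel f Q Q' (TyArr A B) =
     {(g, g'). g \<in> sdom Q (TyArr A B) \<and> g' \<in> sdom Q' (TyArr A B) \<and>
        (\<forall>(a, a') \<in> logical_rel f Q Q' A. (vapp g a, vapp g' a') \<in> logical_rel f Q Q' B)}"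

lemma partial_surj_VB:
  "partial_surj f Q Q' \<Longrightarrow> partial_surj {(VB q, VB q') | q q'. (q, q') \<in> f} (VB ` Q) (VB ` Q')"
  unfolding partial_surj_def single_valued_def by (auto simp: image_iff)

lemma partial_surj_VP:
  assumes "partial_surj R\<^sub>1 S\<^sub>1 S\<^sub>1'" and "partial_surj R\<^sub>2 S\<^sub>2 S\<^sub>2'"
  shows "partial_surj {(VP a b, VP a' b') | a b a' b'. (a, a') \<in> R\<^sub>1 \<and> (b, b') \<in> R\<^sub>2}
    {VP a b | a b. a \<in> S\<^sub>1 \<and> b \<in> S\<^sub>2} {VP a' b' | a' b'. a' \<in> S\<^sub>1' \<and> b' \<in> S\<^sub>2'}"
  using assms unfolding partial_surj_def single_valued_def by (auto simp: Range_iff)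

lemma single_valued_arrow_rel:
  assumes surjA: "sdom Q' A \<subseteq> Range RA" and svB: "single_valued RB"
  shows "single_valued {(g, g'). g \<in> sdom Q (TyArr A B) \<and> g' \<in> sdom Q' (TyArr A B) \<and>
    (\<forall>(a, a') \<in> RA. (vapp g a, vapp g' a') \<in> RB)}"
proof (rule single_valuedI, clarify)
  fix g g\<^sub>1 g\<^sub>2
  assume g\<^sub>1: "g\<^sub>1 \<in> sdom Q' (TyArr A B)" "\<forall>(a, a') \<in> RA. (vapp g a, vapp g\<^sub>1 a') \<in> RB"
    and g\<^sub>2: "g\<^sub>2 \<in> sdom Q' (TyArr A B)" "\<forall>(a, a') \<in> RA. (vapp g a, vapp g\<^sub>2 a') \<in> RB"
  show "g\<^sub>1 = g\<^sub>2"
  proof (rule sdom_arr_ext[OF g\<^sub>1(1) g\<^sub>2(1)])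
    fix a' assume "a' \<in> sdom Q' A"
    then obtain a where "(a, a') \<in> RA" using surjA by blast
    then show "vapp g\<^sub>1 a' = vapp g\<^sub>2 a'"
      using g\<^sub>1(2) g\<^sub>2(2) svB by (auto dest: single_valuedD)
  qed
qed

lemma arrow_rel_surj:
  assumes fin: "finite Q"
    and RA: "RA \<subseteq> sdom Q A \<times> sdom Q' A" "single_valued RA"
    and RB: "RB \<subseteq> sdom Q B \<times> sdom Q' B" "sdom Q' B \<subseteq> Range RB"
    and nonempty: "sdom Q (TyArr A B) = {} \<Longrightarrow> sdom Q' (TyArr A B) = {}"
    and g': "g' \<in> sdom Q' (TyArr A B)"
  obtains g where "g \<in> sdom Q (TyArr A B)" "\<forall>(a, a') \<in> RA. (vapp g a, vapp g' a') \<in> RB"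
proof -
  obtain g\<^sub>0 where g\<^sub>0: "g\<^sub>0 \<in> sdom Q (TyArr A B)" using nonempty g' by blast
  define h where "h a = (if a \<in> Domain RA
      then SOME b. (b, vapp g' (THE a'. (a, a') \<in> RA)) \<in> RB else vapp g\<^sub>0 a)" for a
  have h_rel: "(h a, vapp g' a') \<in> RB" if aa': "(a, a') \<in> RA" for a a'
  proof -
    have "(THE a'. (a, a') \<in> RA) = a'" using aa' RA(2) by (auto dest: single_valuedD)
    moreover have "vapp g' a' \<in> Range RB" using vapp_in_sdom[OF g'] aa' RA(1) RB(2) by blast
    ultimately show ?thesis unfolding h_def using aa' by (auto intro: someI)
  qed
  have "h a \<in> sdom Q B" if "a \<in> sdom Q A" for a
  proof (cases "a \<in> Domain RA")
    case True
    then show ?thesis using h_rel RB(1) by blast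
  next
    case False
    then show ?thesis unfolding h_def using vapp_in_sdom[OF g\<^sub>0 that] by simp
  qed
  then have g: "VF (Abs_fset ((\<lambda>a. (a, h a)) ` sdom Q A)) \<in> sdom Q (TyArr A B)"
    by (rule VF_graph_in_sdom[OF fin])
  moreover have "\<forall>(a, a') \<in> RA. (vapp (VF (Abs_fset ((\<lambda>a. (a, h a)) ` sdom Q A))) a, vapp g' a') \<in> RB"
    using h_rel RA(1) vapp_VF_graph[OF fin] by auto
  ultimately show ?thesis by (rule that)
qed

lemma partial_surj_arrow_rel:
  assumes fin: "finite Q"
    and RA: "partial_surj RA (sdom Q A) (sdom Q' A)" and RB: "partial_surj RB (sdom Q B) (sdom Q' B)"
    and nonempty: "sdom Q (TyArr A B) = {} \<Longrightarrow> sdom Q' (TyArr A B) = {}"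
  shows "partial_surj {(g, g'). g \<in> sdom Q (TyArr A B) \<and> g' \<in> sdom Q' (TyArr A B) \<and>
    (\<forall>(a, a') \<in> RA. (vapp g a, vapp g' a') \<in> RB)} (sdom Q (TyArr A B)) (sdom Q' (TyArr A B))"
    (is "partial_surj ?R _ _")
  unfolding partial_surj_def
proof (intro conjI)
  show "?R \<subseteq> sdom Q (TyArr A B) \<times> sdom Q' (TyArr A B)" by blast
  show "single_valued ?R" using RA RB unfolding partial_surj_def by (intro single_valued_arrow_rel) auto
  show "Range ?R = sdom Q' (TyArr A B)"
  proof
    show "sdom Q' (TyArr A B) \<subseteq> Range ?R"
    proof
      fix g' assume g': "g' \<in> sdom Q' (TyArr A B)"
      obtain g where "g \<in> sdom Q (TyArr A B)" "\<forall>(a, a') \<in> RA. (vapp g a, vapp g' a') \<in> RB"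
        using arrow_rel_surj[OF fin _ _ _ _ nonempty g'] RA RB unfolding partial_surj_def by blast
      with g' show "g' \<in> Range ?R" by blast
    qed
  qed blast
qed

lemma sdom_arr_empty_iff:
  assumes fin: "finite Q"
  shows "sdom Q (TyArr A B) = {} \<longleftrightarrow> sdom Q A \<noteq> {} \<and> sdom Q B = {}"
proof
  assume empty: "sdom Q (TyArr A B) = {}"
  show "sdom Q A \<noteq> {} \<and> sdom Q B = {}"
  proof (rule ccontr)
    assume "\<not> (sdom Q A \<noteq> {} \<and> sdom Q B = {})"
    then have "(SOME b. b \<in> sdom Q B) \<in> sdom Q B" if "a \<in> sdom Q A" for a
      using that by (metis empty_iff some_in_eq)
    from VF_graph_in_sdom[OF fin, of A "\<lambda>_. SOME b. b \<in> sdom Q B" B, OF this]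
    show False by (simp only: empty empty_iff)
  qed
next
  assume AB: "sdom Q A \<noteq> {} \<and> sdom Q B = {}"
  show "sdom Q (TyArr A B) = {}"
  proof (rule equals0I)
    fix g assume g: "g \<in> sdom Q (TyArr A B)"
    obtain a where "a \<in> sdom Q A" using AB by blast
    from vapp_in_sdom[OF g this] AB show False by simp
  qed
qed

lemma sdom_TyProd_empty_iff: "sdom Q (TyProd A B) = {} \<longleftrightarrow> sdom Q A = {} \<or> sdom Q B = {}"
  by auto

lemma sdom_nonempty: "finite Q \<Longrightarrow> Q \<noteq> {} \<Longrightarrow> sdom Q T \<noteq> {}"
proof (induction T)
  case (TyProd A B)
  then show ?case by (simp only: sdom_TyProd_empty_iff) simp
next
  case (TyArr A B)
  then show ?case by (simp only: sdom_arr_empty_iff) simp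
qed simp_all

lemma sdom_empty_transfer:
  assumes fin: "finite Q" and fin': "finite Q'" and empty: "Q = {} \<Longrightarrow> Q' = {}"
    and T: "sdom Q T = {}"
  shows "sdom Q' T = {}"
proof -
  have Q: "Q = {}" using sdom_nonempty[OF fin] T by blast
  have "sdom Q T = {} \<longleftrightarrow> sdom Q' T = {}" for T
  proof (induction T)
    case (TyProd A B)
    then show ?case by (simp only: sdom_TyProd_empty_iff)
  next
    case (TyArr A B)
    then show ?case by (simp only: sdom_arr_empty_iff[OF fin] sdom_arr_empty_iff[OF fin'])
  qed (simp_all add: Q empty)
  with T show ?thesis by simp
qed

lemma partial_surj_logical_rel:
  assumes fin: "finite Q" and fin': "finite Q'" and f: "partial_surj f Q Q'"
  shows "partial_surj (logical_rel f Q Q' T) (sdom Q T) (sdom Q' T)"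
proof (induction T)
  case TyO
  then show ?case using partial_surj_VB[OF f] by simp
next
  case TyOne
  then show ?case by (simp add: partial_surj_def single_valued_def)
next
  case (TyProd A B)
  then show ?case using partial_surj_VP[OF TyProd.IH] by simp
next
  case (TyArr A B)
  have "Q = {} \<Longrightarrow> Q' = {}" using f unfolding partial_surj_def by blast
  then have "sdom Q (TyArr A B) = {} \<Longrightarrow> sdom Q' (TyArr A B) = {}"
    by (rule sdom_empty_transfer[OF fin fin'])
  then show ?case unfolding logical_rel.simps by (rule partial_surj_arrow_rel[OF fin TyArr.IH])
qed

lemma logical_rel_sdom:
  assumes "finite Q" and "finite Q'" and "partial_surj f Q Q'" and "(x, x') \<in> logical_rel f Q Q' T"
  shows "x \<in> sdom Q T \<and> x' \<in> sdom Q' T"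
  using partial_surj_logical_rel[OF assms(1-3), of T] assms(4) unfolding partial_surj_def by blast

lemma logical_rel_eval:
  assumes fin: "finite Q" and fin': "finite Q'" and f: "partial_surj f Q Q'"
  shows "typing \<Gamma> M T \<Longrightarrow> length \<rho> = length \<Gamma> \<Longrightarrow> length \<rho>' = length \<Gamma> \<Longrightarrow>
    (\<And>i. i < length \<Gamma> \<Longrightarrow> (\<rho> ! i, \<rho>' ! i) \<in> logical_rel f Q Q' (\<Gamma> ! i)) \<Longrightarrow>
    (eval M Q \<rho>, eval M Q' \<rho>') \<in> logical_rel f Q Q' T"
proof (induction arbitrary: \<rho> \<rho>' rule: typing.induct)
  case (t_abs A \<Gamma> M B)
  note rel_sdom = logical_rel_sdom[OF fin fin' f]
  have "list_all2 (\<lambda>v A. v \<in> sdom Q A) \<rho> \<Gamma>" "list_all2 (\<lambda>v A. v \<in> sdom Q' A) \<rho>' \<Gamma>"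
    using t_abs.prems(1,2) rel_sdom[OF t_abs.prems(3)] by (auto intro!: list_all2_all_nthI)
  then have "eval (TAbs A M) Q \<rho> \<in> sdom Q (TyArr A B)" "eval (TAbs A M) Q' \<rho>' \<in> sdom Q' (TyArr A B)"
    using eval_in_sdom[OF fin typing.t_abs[OF t_abs.hyps]] eval_in_sdom[OF fin' typing.t_abs[OF t_abs.hyps]]
    by simp_all
  moreover have "(vapp (eval (TAbs A M) Q \<rho>) a, vapp (eval (TAbs A M) Q' \<rho>') a') \<in> logical_rel f Q Q' B"
    if aa': "(a, a') \<in> logical_rel f Q Q' A" for a a'
  proof -
    have "(eval M Q (a # \<rho>), eval M Q' (a' # \<rho>')) \<in> logical_rel f Q Q' B"
      using t_abs.IH[of "a # \<rho>" "a' # \<rho>'"] t_abs.prems aa' by (auto simp: nth_Cons split: nat.split)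
    then show ?thesis
      using rel_sdom[OF aa'] by (simp only: eval.simps vapp_VF_graph[OF fin] vapp_VF_graph[OF fin'])
  qed
  ultimately show ?case unfolding logical_rel.simps by blast
next
  case (t_app \<Gamma> M A B N)
  have "(eval M Q \<rho>, eval M Q' \<rho>') \<in> logical_rel f Q Q' (TyArr A B)"
    and "(eval N Q \<rho>, eval N Q' \<rho>') \<in> logical_rel f Q Q' A"
    using t_app.IH t_app.prems by blast+
  then show ?case unfolding logical_rel.simps by auto
next
  case (t_fst \<Gamma> M A B)
  from t_fst.IH[OF t_fst.prems] obtain a b a' b' where "eval M Q \<rho> = VP a b" "eval M Q' \<rho>' = VP a' b'"
    "(a, a') \<in> logical_rel f Q Q' A" by auto
  then show ?case by (simp add: vfst_def)
next
  case (t_snd \<Gamma> M A B)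
  from t_snd.IH[OF t_snd.prems] obtain a b a' b' where "eval M Q \<rho> = VP a b" "eval M Q' \<rho>' = VP a' b'"
    "(b, b') \<in> logical_rel f Q Q' B" by auto
  then show ?case by (simp add: vsnd_def)
qed simp_all

lemma simQ_transfer:
  assumes fin: "finite Q" and fin': "finite Q'" and f: "partial_surj f Q Q'"
    and MN: "simQ Q T M N"
  shows "simQ Q' T M N"
proof -
  have M: "typing [] M T" and N: "typing [] N T" and MN_sem: "sem Q M = sem Q N"
    using MN by (simp_all add: simQ_def)
  have "(sem Q M, sem Q' M) \<in> logical_rel f Q Q' T" "(sem Q M, sem Q' N) \<in> logical_rel f Q Q' T"
    using logical_rel_eval[OF fin fin' f M, of "[]" "[]"] logical_rel_eval[OF fin fin' f N, of "[]" "[]"] MN_sem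
    by (simp_all add: sem_def)
  moreover have "single_valued (logical_rel f Q Q' T)"
    using partial_surj_logical_rel[OF fin fin' f] unfolding partial_surj_def by blast
  ultimately have "sem Q' M = sem Q' N" by (meson single_valuedD)
  with M N show ?thesis by (rule simQI)
qed

lemma coarsening_simQ:
  assumes fin: "finite Q" and fin': "finite Q'" and f: "partial_surj f Q Q'"
  shows "coarsening (simQ Q) (simQ Q')"
proof (rule coarsening.intro[OF ccc_congruence_simQ[OF fin] ccc_congruence_simQ[OF fin']])
  show "coarsening_axioms (simQ Q) (simQ Q')"
    by unfold_locales (rule simQ_transfer[OF fin fin' f])
qed

theorem mainTheorem9:
  shows "(\<forall>Q :: 'a set. finite Q \<longrightarrow>
            cartesian_closed (LamQ Q) \<and> cc_functor Lam (LamQ Q) id (piQ Q)) \<and>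
         (\<forall>(Q :: 'a set) (Q' :: 'b set) (f :: ('a \<times> 'b) set).
            finite Q \<longrightarrow> finite Q' \<longrightarrow> partial_surj f Q Q' \<longrightarrow>
            (\<exists>F. cc_functor (LamQ Q) (LamQ Q') id F \<and>
                 (\<forall>A B. \<forall>c\<in>Hom Lam A B. F A B (piQ Q A B c) = piQ Q' A B c)))"
proof (intro conjI allI impI)
  fix Q :: "'a set" assume fin: "finite Q"
  have simQ: "ccc_congruence (simQ Q)" by (rule ccc_congruence_simQ[OF fin])
  show "cartesian_closed (LamQ Q)"
    using ccc_congruence.cartesian_closed[OF simQ] by (simp add: LamQ_eq_term_cat)
  show "cc_functor Lam (LamQ Q) id (piQ Q)"
    using coarsening.coarsen_cc_functor[OF coarsening_beq[OF simQ]]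
    by (simp add: Lam_eq_term_cat LamQ_eq_term_cat piQ_eq_coarsen)
next
  fix Q :: "'a set" and Q' :: "'b set" and f :: "('a \<times> 'b) set"
  assume fin: "finite Q" and fin': "finite Q'" and f: "partial_surj f Q Q'"
  have QQ': "coarsening (simQ Q) (simQ Q')" by (rule coarsening_simQ[OF fin fin' f])
  have "cc_functor (LamQ Q) (LamQ Q') id (piQ Q')"
    using coarsening.coarsen_cc_functor[OF QQ'] by (simp add: LamQ_eq_term_cat piQ_eq_coarsen)
  moreover have "piQ Q' A B (piQ Q A B c) = piQ Q' A B c" if "c \<in> Hom Lam A B" for A B c
    using coarsen_coarsen[OF coarsening_beq[OF ccc_congruence_simQ[OF fin]] QQ'] that
    by (simp add: Lam_eq_term_cat piQ_eq_coarsen)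
  ultimately show "\<exists>F. cc_functor (LamQ Q) (LamQ Q') id F \<and>
      (\<forall>A B. \<forall>c\<in>Hom Lam A B. F A B (piQ Q A B c) = piQ Q' A B c)"
    by blast
qed

end
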